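(* Let $w$ be a doubly monotone contract, i.e. both $y\mapsto w(y)$ and $y\mapsto y-w(y)$ are non-decreasing on $\mathbb{R}_+$. Then either (1) $V_P(w\mid \{a_0\}) = V_P(w)$, or (2) for every $\epsilon>0$ there exists $x\in\mathbb{R}_+$ with $w(x)>r_0^w$ such that, for the project $a_1=(\delta_x,0)$ (which yields prize $x$ with certainty at zero cost), $V_P(w\mid\{a_0,a_1\}) < V_P(w)+\epsilon$.
   Context: Model. A project is a pair $a=(F,c)$ where $F$ is a probability distribution on $\mathbb{R}_+$ with finite mean and $c\ge 0$ is a cost. An agent has a finite set of projects $\mathcal{A}=\{a_i\}_{i=0}^n$, $a_i=(F_i,c_i)$, whose prizes $y_i\sim F_i$ are drawn independently. The agent searches sequentially with recall (Pandora's box search): at each stage, having observed the prizes of the projects opened so far, he either opens a not-yet-opened project $a_i$, paying $c_i$ and learning $y_i$, or stops and presents a single prize among those observed (he may always present the prize $0$, e.g. without opening any project). A contract is a measurable function $w:\mathbb{R}_+\to\mathbb{R}$ with $w(y)\ge 0$ for all $y$ (limited liability). If the agent presents prize $y$ having opened the set $S$ of projects, the (risk-neutral) agent's payoff is $w(y)-\sum_{i\in S}c_i$ and the (risk-neutral) principal's payoff is $y-w(y)$. Let $\Sigma(w,\mathcal{A})$ denote the set of search strategies maximizing the agent's expected payoff, and (ties broken in the principal's favor) $V_P(w\mid\mathcal{A})=\sup_{\sigma\in\Sigma(w,\mathcal{A})}\mathbb{E}_\sigma[y-w(y)]$, where $\mathbb{E}_\sigma$ is expectation over the presented prize. The principal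 knows only one project $a_0=(F_0,c_0)$ of the agent; her payoff guarantee from $w$ is $V_P(w)=\inf_{\mathcal{A}\supseteq\{a_0\}}V_P(w\mid\mathcal{A})$, the infimum over all finite sets of projects containing $a_0$. The $w$-induced index of $a_0$, $r_0^w$, is the smallest solution $r$ of $c_0=\int [w(y)-r]^+\,dF_0(y)$. $\delta_x$ denotes the Dirac mass at $x$. *)

theory Defs
  imports "HOL-Probability.Probability"
begin

text \<open>A project: a prize distribution on the reals (concentrated on [0,inf), finite mean)
  together with a cost.\<close>
type_synonym project = "real measure \<times> real"

definition valid_project :: "project \<Rightarrow> bool" where
  "valid_project a \<longleftrightarrow> prob_space (fst a) \<and> sets (fst a) = sets borel
     \<and> (AE y in fst a. 0 \<le> y) \<and> integrable (fst a) (\<lambda>y. y) \<and> 0 \<le> snd a"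

definition contract :: "(real \<Rightarrow> real) \<Rightarrow> bool" where
  "contract w \<longleftrightarrow> w \<in> borel_measurable borel \<and> (\<forall>y\<ge>0. 0 \<le> w y)"

definition doubly_monotone :: "(real \<Rightarrow> real) \<Rightarrow> bool" where
  "doubly_monotone w \<longleftrightarrow> mono_on {0..} w \<and> mono_on {0..} (\<lambda>y. y - w y)"

text \<open>Search with recall. A history is the list of (project index, observed prize)
  in the order of opening. A (pure) strategy maps histories to actions.\<close>
datatype action = Open nat | Present real
type_synonym history = "(nat \<times> real) list"
type_synonym strategy = "history \<Rightarrow> action"

fun run :: "strategy \<Rightarrow> (nat \<Rightarrow> real) \<Rightarrow> nat \<Rightarrow> history \<Rightarrow> history \<times> real" where
  "run \<sigma> y 0 h = (h, 0)"
| "run \<sigma> y (Suc k) h = (case \<sigma> h of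
       Open i \<Rightarrow> run \<sigma> y k (h @ [(i, y i)])
     | Present p \<Rightarrow> (h, p))"

definition valid_strategy :: "nat \<Rightarrow> strategy \<Rightarrow> bool" where
  "valid_strategy n \<sigma> \<longleftrightarrow> (\<forall>h.
      (\<forall>i. \<sigma> h = Open i \<longrightarrow> i \<le> n \<and> i \<notin> fst ` set h) \<and>
      (\<forall>p. \<sigma> h = Present p \<longrightarrow> p = 0 \<or> p \<in> snd ` set h))"

definition outcome :: "nat \<Rightarrow> strategy \<Rightarrow> (nat \<Rightarrow> real) \<Rightarrow> history \<times> real" where
  "outcome n \<sigma> y = run \<sigma> y (n + 2) []"

definition presented :: "nat \<Rightarrow> strategy \<Rightarrow> (nat \<Rightarrow> real) \<Rightarrow> real" where
  "presented n \<sigma> y = snd (outcome n \<sigma> y)"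

definition opened :: "nat \<Rightarrow> strategy \<Rightarrow> (nat \<Rightarrow> real) \<Rightarrow> nat set" where
  "opened n \<sigma> y = fst ` set (fst (outcome n \<sigma> y))"

definition prizes :: "nat \<Rightarrow> (nat \<Rightarrow> project) \<Rightarrow> (nat \<Rightarrow> real) measure" where
  "prizes n a = PiM {0..n} (\<lambda>i. fst (a i))"

definition admissible :: "nat \<Rightarrow> (nat \<Rightarrow> project) \<Rightarrow> strategy \<Rightarrow> bool" where
  "admissible n a \<sigma> \<longleftrightarrow> valid_strategy n \<sigma>
     \<and> presented n \<sigma> \<in> borel_measurable (prizes n a)
     \<and> opened n \<sigma> \<in> measurable (prizes n a) (count_space UNIV)"

definition agent_value :: "(real \<Rightarrow> real) \<Rightarrow> nat \<Rightarrow> (nat \<Rightarrow> project) \<Rightarrow> strategy \<Rightarrow> real" where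
  "agent_value w n a \<sigma> = (\<integral>y. w (presented n \<sigma> y) - (\<Sum>i\<in>opened n \<sigma> y. snd (a i)) \<partial>prizes n a)"

definition principal_value :: "(real \<Rightarrow> real) \<Rightarrow> nat \<Rightarrow> (nat \<Rightarrow> project) \<Rightarrow> strategy \<Rightarrow> real" where
  "principal_value w n a \<sigma> = (\<integral>y. presented n \<sigma> y - w (presented n \<sigma> y) \<partial>prizes n a)"

definition opt_strats :: "(real \<Rightarrow> real) \<Rightarrow> nat \<Rightarrow> (nat \<Rightarrow> project) \<Rightarrow> strategy set" where
  "opt_strats w n a = {\<sigma>. admissible n a \<sigma> \<and>
      (\<forall>\<tau>. admissible n a \<tau> \<longrightarrow> agent_value w n a \<tau> \<le> agent_value w n a \<sigma>)}"

text \<open>V_P(w | A) for A = {a 0, ..., a n}, ties broken in the principal's favour.\<close>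
definition VP_cond :: "(real \<Rightarrow> real) \<Rightarrow> nat \<Rightarrow> (nat \<Rightarrow> project) \<Rightarrow> ereal" where
  "VP_cond w n a = (SUP \<sigma>\<in>opt_strats w n a. ereal (principal_value w n a \<sigma>))"

definition VP :: "(real \<Rightarrow> real) \<Rightarrow> project \<Rightarrow> ereal" where
  "VP w a0 = (INF na\<in>{(n, a). a 0 = a0 \<and> (\<forall>i\<le>n. valid_project (a i))}.
                 VP_cond w (fst na) (snd na))"

text \<open>The w-induced index: smallest r with c0 = E[(w(y) - r)^+]; +infinity if none.\<close>
definition r_index :: "(real \<Rightarrow> real) \<Rightarrow> project \<Rightarrow> ereal" where
  "r_index w a0 = Inf {ereal r | r.
      ennreal (snd a0) = (\<integral>\<^sup>+ y. ennreal (w y - r) \<partial>fst a0)}"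

end

(*
  The agent may always follow the Bellman-optimal search rule, presenting among the prizes of
  highest reward w the largest one; by double monotonicity this prize also maximises y - w y among
  the observed prizes. If the rule ever opens a0, the principal thus gets at least y0 - w y0 in
  expectation; if it stops before, the expected excess of a0 over the reward w x of the best prize
  x in hand is below the cost of a0, i.e. w x exceeds the index r0. Hence for every family
  V_P(w | A) >= min (E[y0 - w y0], B) whenever B <= x - w x for all x with w x > r0.

  Conversely V_P(w | {a0}) <= E[y0 - w y0], and adding a costless safe prize x with w x > r0 caps
  the principal at x - w x: either the agent, who can secure w x, never opens a0, or the excess of
  a0 over w x equals its cost, in which case a0 almost surely yields less reward than x and hence
  no larger prize. So if V_P(w) < V_P(w | {a0}), then V_P(w) + eps > x - w x for some such x.
*)
theory Submission
  imports Defs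
begin

lemma PiM_insert_fibers:
  fixes M :: "nat \<Rightarrow> real measure" and f :: "(nat \<Rightarrow> real) \<Rightarrow> real"
  assumes M: "\<And>j. prob_space (M j)" and J: "finite J" "i \<notin> J"
    and f: "integrable (PiM (insert i J) M) f"
  shows "AE t in M i. integrable (PiM J M) (\<lambda>y. f (y(i:=t)))"
    and "integrable (M i) (\<lambda>t. \<integral>y. f (y(i:=t)) \<partial>PiM J M)"
    and "integral\<^sup>L (PiM (insert i J) M) f = (\<integral>t. (\<integral>y. f (y(i:=t)) \<partial>PiM J M) \<partial>M i)"
proof -
  interpret product_sigma_finite M
    by (simp add: product_sigma_finite_def M prob_space_imp_sigma_finite)
  interpret P: pair_sigma_finite "PiM J M" "M i"
    by (intro pair_sigma_finite.intro prob_space_imp_sigma_finite prob_space_PiM M)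
  have [measurable]: "f \<in> borel_measurable (PiM (insert i J) M)" using f by auto
  have meas: "(\<lambda>(y,t). f (y(i:=t))) \<in> borel_measurable (PiM J M \<Otimes>\<^sub>M M i)"
    by measurable
  have "(\<lambda>(y,t). ennreal (norm (f (y(i:=t))))) \<in> borel_measurable (PiM J M \<Otimes>\<^sub>M M i)"
    by measurable
  from sigma_finite_measure.nn_integral_fst[OF prob_space_imp_sigma_finite[OF M] this]
  have "(\<integral>\<^sup>+ z. ennreal (norm ((\<lambda>(y,t). f (y(i:=t))) z)) \<partial>(PiM J M \<Otimes>\<^sub>M M i))
      = (\<integral>\<^sup>+ y. \<integral>\<^sup>+ t. ennreal (norm (f (y(i:=t)))) \<partial>M i \<partial>PiM J M)"
    by (simp add: case_prod_beta')
  also have "\<dots> = (\<integral>\<^sup>+ y. ennreal (norm (f y)) \<partial>PiM (insert i J) M)"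
    by (rule product_nn_integral_insert[symmetric]) (use J in auto)
  also have "\<dots> < \<infinity>" using f unfolding integrable_iff_bounded by simp
  finally have int: "integrable (PiM J M \<Otimes>\<^sub>M M i) (\<lambda>(y,t). f (y(i:=t)))"
    unfolding integrable_iff_bounded using meas by simp
  show "AE t in M i. integrable (PiM J M) (\<lambda>y. f (y(i:=t)))"
    using P.AE_integrable_snd[of "\<lambda>y t. f (y(i:=t))"] int by simp
  show "integrable (M i) (\<lambda>t. \<integral>y. f (y(i:=t)) \<partial>PiM J M)"
    using P.integrable_snd[of "\<lambda>y t. f (y(i:=t))"] int by simp
  have "integral\<^sup>L (PiM (insert i J) M) f = (\<integral>y. (\<integral>t. f (y(i:=t)) \<partial>M i) \<partial>PiM J M)"
    by (rule product_integral_insert) (use J f in auto)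
  also have "\<dots> = (\<integral>t. (\<integral>y. f (y(i:=t)) \<partial>PiM J M) \<partial>M i)"
    using P.Fubini_integral[of "\<lambda>y t. f (y(i:=t))"] int by simp
  finally show "integral\<^sup>L (PiM (insert i J) M) f = (\<integral>t. (\<integral>y. f (y(i:=t)) \<partial>PiM J M) \<partial>M i)" .
qed

lemma
  fixes M :: "nat \<Rightarrow> real measure" and f :: "real \<Rightarrow> real"
  assumes M: "\<And>j. prob_space (M j)" and j: "j \<in> I" and f: "integrable (M j) f"
  shows integrable_PiM_component: "integrable (PiM I M) (\<lambda>y. f (y j))"
    and integral_PiM_component: "(\<integral>y. f (y j) \<partial>PiM I M) = integral\<^sup>L (M j) f"
proof -
  have m: "(\<lambda>y. y j) \<in> measurable (PiM I M) (M j)" by (rule measurable_component_singleton[OF j])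
  have fm: "f \<in> borel_measurable (M j)" using f by auto
  have D: "distr (PiM I M) (M j) (\<lambda>y. y j) = M j" by (rule distr_PiM_component[OF M j])
  show "integrable (PiM I M) (\<lambda>y. f (y j))" using integrable_distr_eq[OF m fm] D f by simp
  show "(\<integral>y. f (y j) \<partial>PiM I M) = integral\<^sup>L (M j) f" using integral_distr[OF m fm] D by simp
qed

section \<open>The best observed prize\<close>

fun max_reward :: "(real \<Rightarrow> real) \<Rightarrow> history \<Rightarrow> real" where
  "max_reward w [] = w 0"
| "max_reward w ((i,v)#h) = max (w v) (max_reward w h)"

text \<open>Ties in \<open>w\<close> are broken towards the larger prize: by double monotonicity the chosen
  prize then also maximises the principal's payoff \<open>y - w y\<close>.\<close>
fun best_prize :: "(real \<Rightarrow> real) \<Rightarrow> history \<Rightarrow> real" where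
  "best_prize w [] = 0"
| "best_prize w ((i,v)#h) =
    (let b = best_prize w h in if w b < w v \<or> (w b = w v \<and> b < v) then v else b)"

lemma max_reward_snoc: "max_reward w (h @ [(i,v)]) = max (max_reward w h) (w v)"
proof (induction h)
  case (Cons a h) then show ?case by (cases a) (auto simp: max_def)
qed simp

lemma max_reward_ge: "q \<in> insert 0 (snd ` set h) \<Longrightarrow> w q \<le> max_reward w h"
proof (induction h)
  case (Cons a h)
  obtain i v where a: "a = (i,v)" by (cases a)
  show ?case using Cons unfolding a by (cases "q = v") (auto simp: max_def)
qed simp

lemma best_prize_mem: "best_prize w h \<in> insert 0 (snd ` set h)"
proof (induction h)
  case (Cons a h) then show ?case by (cases a) (auto simp: Let_def)
qed simp

lemma reward_best_prize: "w (best_prize w h) = max_reward w h"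
proof (induction h)
  case (Cons a h) then show ?case by (cases a) (auto simp: Let_def max_def)
qed simp

lemma best_prize_ge:
  "q \<in> insert 0 (snd ` set h) \<Longrightarrow> w q = max_reward w h \<Longrightarrow> q \<le> best_prize w h"
proof (induction h arbitrary: q)
  case (Cons a h)
  obtain i v where a: "a = (i,v)" by (cases a)
  show ?case
  proof (cases "q = v")
    case False
    then have q: "q \<in> insert 0 (snd ` set h)" using Cons.prems(1) a by auto
    from max_reward_ge[OF q, of w] Cons.prems(2) reward_best_prize[of w h] Cons.IH[OF q]
    show ?thesis unfolding a by (auto simp: max_def Let_def)
  qed (use Cons.prems reward_best_prize[of w h] a in \<open>auto simp: Let_def\<close>)
qed simp

lemma best_prize_principal_max:
  assumes mono_w: "mono_on {0..} w" and mono_g: "mono_on {0..} (\<lambda>y. y - w y)"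
    and nonneg: "\<forall>q \<in> snd ` set h. 0 \<le> q" and q: "q \<in> insert 0 (snd ` set h)"
  shows "q - w q \<le> best_prize w h - w (best_prize w h)"
proof -
  let ?b = "best_prize w h"
  have b0: "0 \<le> ?b" and q0: "0 \<le> q" using nonneg q best_prize_mem[of w h] by auto
  have "q \<le> ?b"
  proof (cases "w q = w ?b")
    case True then show ?thesis using best_prize_ge[OF q] reward_best_prize[of w h] by simp
  next
    case False
    with max_reward_ge[OF q, of w] have "w q < w ?b" by (simp add: reward_best_prize)
    then show ?thesis using mono_onD[OF mono_w, of ?b q] b0 q0 by force
  qed
  then show ?thesis using mono_onD[OF mono_g] b0 q0 by simp
qed

section \<open>Runs of a search strategy\<close>

abbreviation unopened :: "nat \<Rightarrow> history \<Rightarrow> nat set" where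
  "unopened n h \<equiv> {0..n} - fst ` set h"

lemma finite_unopened: "finite (unopened n h)"
  by simp

lemma unopened_snoc: "unopened n (h @ [(i,t)]) = unopened n h - {i}"
  by auto

lemma card_unopened_snoc:
  assumes "i \<in> unopened n h" "card (unopened n h) < Suc k"
  shows "card (unopened n (h @ [(i,t)])) < k"
proof -
  have "card (unopened n h) > 0" using assms(1) by (subst card_gt_0_iff) auto
  then show ?thesis using assms unfolding unopened_snoc by simp
qed

lemma run_prefix: "\<exists>h'. fst (run \<tau> y k h) = h @ h'"
proof (induction \<tau> y k h rule: run.induct)
  case (2 \<sigma> y k h)
  show ?case
  proof (cases "\<sigma> h")
    case (Open i)
    then obtain h' where "fst (run \<sigma> y k (h @ [(i, y i)])) = (h @ [(i, y i)]) @ h'" using 2 by blast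
    then show ?thesis using Open by auto
  qed simp
qed simp

context
  fixes n :: nat and \<tau> :: strategy
  assumes valid: "valid_strategy n \<tau>"
begin

lemma valid_OpenD: "\<tau> h = Open i \<Longrightarrow> i \<le> n \<and> i \<notin> fst ` set h"
  and valid_PresentD: "\<tau> h = Present p \<Longrightarrow> p \<in> insert 0 (snd ` set h)"
  using valid unfolding valid_strategy_def by auto

lemma run_mem:
  "(j,v) \<in> set (fst (run \<tau> y k h)) \<Longrightarrow> (j,v) \<in> set h \<or> (j \<le> n \<and> j \<notin> fst ` set h \<and> v = y j)"
proof (induction k arbitrary: h)
  case (Suc k)
  show ?case
  proof (cases "\<tau> h")
    case (Open i)
    have "(j,v) \<in> set (h @ [(i, y i)]) \<or> (j \<le> n \<and> j \<notin> fst ` set (h @ [(i, y i)]) \<and> v = y j)"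
      using Suc.IH[of "h @ [(i, y i)]"] Suc.prems Open by simp
    moreover have "i \<le> n \<and> i \<notin> fst ` set h" by (rule valid_OpenD[OF Open])
    ultimately show ?thesis by auto
  next
    case (Present p) then show ?thesis using Suc by auto
  qed
qed simp

lemma run_presented_mem: "snd (run \<tau> y k h) \<in> insert 0 (snd ` set (fst (run \<tau> y k h)))"
proof (induction k arbitrary: h)
  case (Suc k)
  then show ?case by (cases "\<tau> h") (use valid_PresentD in auto)
qed simp

lemma run_cong:
  "(\<And>j. j \<le> n \<Longrightarrow> j \<notin> fst ` set h \<Longrightarrow> y j = z j) \<Longrightarrow> run \<tau> y k h = run \<tau> z k h"
proof (induction k arbitrary: h)
  case (Suc k)
  show ?case
  proof (cases "\<tau> h")
    case (Open i)
    with valid_OpenD Suc.prems have "y i = z i" by blast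
    moreover have "run \<tau> y k (h @ [(i, z i)]) = run \<tau> z k (h @ [(i, z i)])"
      by (rule Suc.IH) (use Suc.prems in auto)
    ultimately show ?thesis using Open by simp
  qed simp
qed simp

lemma run_Open:
  assumes "\<tau> h = Open i"
  shows "run \<tau> (y(i:=t)) (Suc k) h = run \<tau> y k (h @ [(i,t)])"
proof -
  have "run \<tau> (y(i:=t)) (Suc k) h = run \<tau> (y(i:=t)) k (h @ [(i,t)])" using assms by simp
  also have "\<dots> = run \<tau> y k (h @ [(i,t)])" by (rule run_cong) auto
  finally show ?thesis .
qed

lemma run_ends_Present:
  "card (unopened n h) < k \<Longrightarrow> \<tau> (fst (run \<tau> y k h)) = Present (snd (run \<tau> y k h))"
proof (induction k arbitrary: h)
  case (Suc k)
  show ?case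
  proof (cases "\<tau> h")
    case (Open i)
    with valid_OpenD have i: "i \<in> unopened n h" by auto
    have "\<tau> (fst (run \<tau> y k (h @ [(i, y i)]))) = Present (snd (run \<tau> y k (h @ [(i, y i)])))"
      by (intro Suc.IH card_unopened_snoc[OF i Suc.prems])
    then show ?thesis using Open by simp
  qed simp
qed simp

lemma run_opens_indep:
  "j \<notin> fst ` set h \<Longrightarrow> (\<And>l. l \<noteq> j \<Longrightarrow> y l = z l) \<Longrightarrow>
    j \<in> fst ` set (fst (run \<tau> y k h)) \<longleftrightarrow> j \<in> fst ` set (fst (run \<tau> z k h))"
proof (induction k arbitrary: h)
  case (Suc k)
  show ?case
  proof (cases "\<tau> h")
    case (Open i)
    show ?thesis
    proof (cases "i = j")
      case True
      have "j \<in> fst ` set (fst (run \<tau> u k (h @ [(j, u j)])))" for u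
        using run_prefix[of \<tau> u k "h @ [(j, u j)]"] by force
      then show ?thesis using Open True by simp
    next
      case False
      then have "y i = z i" using Suc.prems by auto
      moreover have "j \<in> fst ` set (fst (run \<tau> y k (h @ [(i, z i)]))) \<longleftrightarrow>
          j \<in> fst ` set (fst (run \<tau> z k (h @ [(i, z i)])))"
        by (rule Suc.IH) (use Suc.prems False in auto)
      ultimately show ?thesis using Open by simp
    qed
  qed simp
qed simp

lemma run_Nil_mem: "(j,v) \<in> set (fst (run \<tau> y k [])) \<Longrightarrow> j \<le> n \<and> v = y j"
  using run_mem by fastforce

lemma run_Nil_opened: "fst ` set (fst (run \<tau> y k [])) \<subseteq> {0..n}"
  using run_Nil_mem by force

lemma run_Nil_presented:
  "snd (run \<tau> y k []) = 0 \<or> (\<exists>j \<in> fst ` set (fst (run \<tau> y k [])). snd (run \<tau> y k []) = y j)"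
  using run_presented_mem[of y k "[]"] run_Nil_mem[of _ _ y k] by force

end

section \<open>The agent's optimal search\<close>

definition mono_nonexpansive :: "(real \<Rightarrow> real) \<Rightarrow> bool" where
  "mono_nonexpansive f \<longleftrightarrow> (\<forall>x y. x \<le> y \<longrightarrow> f x \<le> f y \<and> f y \<le> f x + (y - x))"

lemma mono_nonexpansiveI:
  "(\<And>x y. x \<le> y \<Longrightarrow> f x \<le> f y) \<Longrightarrow> (\<And>x y. x \<le> y \<Longrightarrow> f y \<le> f x + (y - x)) \<Longrightarrow>
    mono_nonexpansive f"
  unfolding mono_nonexpansive_def by blast

lemma mono_nonexpansiveD:
  "mono_nonexpansive f \<Longrightarrow> x \<le> y \<Longrightarrow> f x \<le> f y"
  "mono_nonexpansive f \<Longrightarrow> x \<le> y \<Longrightarrow> f y \<le> f x + (y - x)"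
  unfolding mono_nonexpansive_def by blast+

lemma mono_nonexpansive_id: "mono_nonexpansive (\<lambda>x. x)"
  by (simp add: mono_nonexpansive_def)

lemma mono_nonexpansive_continuous:
  assumes "mono_nonexpansive f"
  shows "continuous_on UNIV f"
proof -
  have "\<bar>f x - f y\<bar> \<le> \<bar>x - y\<bar>" for x y
    using mono_nonexpansiveD[OF assms, of x y] mono_nonexpansiveD[OF assms, of y x]
    by (cases "x \<le> y") auto
  then have "1-lipschitz_on UNIV f"
    by (intro lipschitz_onI) (auto simp: dist_real_def)
  then show ?thesis by (rule lipschitz_on_continuous_on)
qed

lemma mono_nonexpansive_measurable: "mono_nonexpansive f \<Longrightarrow> f \<in> borel_measurable borel"
  by (intro borel_measurable_continuous_onI mono_nonexpansive_continuous)

lemma mono_nonexpansive_max: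
  assumes "mono_nonexpansive f"
  shows "mono_nonexpansive (\<lambda>m. f (max m x))"
proof (rule mono_nonexpansiveI)
  fix m m' :: real assume "m \<le> m'"
  then have le: "max m x \<le> max m' x" and d: "max m' x - max m x \<le> m' - m" by (auto simp: max_def)
  show "f (max m x) \<le> f (max m' x)" using mono_nonexpansiveD(1)[OF assms le] .
  show "f (max m' x) \<le> f (max m x) + (m' - m)" using mono_nonexpansiveD(2)[OF assms le] d by linarith
qed

lemma mono_nonexpansive_Max_insert:
  fixes C :: "nat \<Rightarrow> real \<Rightarrow> real"
  assumes R: "finite R" and C: "\<And>i. i \<in> R \<Longrightarrow> mono_nonexpansive (C i)"
  shows "mono_nonexpansive (\<lambda>m. Max (insert m ((\<lambda>i. C i m) ` R)))"
proof (rule mono_nonexpansiveI)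
  fix x y :: real assume xy: "x \<le> y"
  let ?Mx = "Max (insert x ((\<lambda>i. C i x) ` R))" and ?My = "Max (insert y ((\<lambda>i. C i y) ` R))"
  have Mx: "x \<le> ?Mx" "\<And>i. i \<in> R \<Longrightarrow> C i x \<le> ?Mx"
   and My: "y \<le> ?My" "\<And>i. i \<in> R \<Longrightarrow> C i y \<le> ?My"
    using R by (auto intro: Max_ge)
  show "?Mx \<le> ?My"
  proof (rule Max.boundedI)
    fix z assume "z \<in> insert x ((\<lambda>i. C i x) ` R)"
    then consider "z = x" | i where "i \<in> R" "z = C i x" by auto
    then show "z \<le> ?My"
    proof cases
      case 2 with mono_nonexpansiveD(1)[OF C xy] My(2) show ?thesis by fastforce
    qed (use xy My(1) in simp)
  qed (use R in auto)
  show "?My \<le> ?Mx + (y - x)"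
  proof (rule Max.boundedI)
    fix z assume "z \<in> insert y ((\<lambda>i. C i y) ` R)"
    then consider "z = y" | i where "i \<in> R" "z = C i y" by auto
    then show "z \<le> ?Mx + (y - x)"
    proof cases
      case 2 with mono_nonexpansiveD(2)[OF C xy] Mx(2) show ?thesis by fastforce
    qed (use Mx(1) in simp)
  qed (use R in auto)
qed

definition agent_payoff :: "(real \<Rightarrow> real) \<Rightarrow> (nat \<Rightarrow> real) \<Rightarrow> history \<times> real \<Rightarrow> real" where
  "agent_payoff w c r = w (snd r) - (\<Sum>j\<in>fst ` set (fst r). c j)"

definition principal_payoff :: "(real \<Rightarrow> real) \<Rightarrow> history \<times> real \<Rightarrow> real" where
  "principal_payoff w r = snd r - w (snd r)"

lemma sum_opened_snoc:
  "i \<notin> fst ` set h \<Longrightarrow>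
    (\<Sum>j\<in>fst ` set (h @ [(i,t)]). c j) = (\<Sum>j\<in>fst ` set h. c j) + c i"
  by (simp add: add.commute)

locale search_model =
  fixes w :: "real \<Rightarrow> real" and F :: "nat \<Rightarrow> real measure" and c :: "nat \<Rightarrow> real"
  assumes prob_space_F: "prob_space (F i)"
    and sets_F: "sets (F i) = sets borel"
    and integrable_reward: "integrable (F i) w"
    and integrable_prize: "integrable (F i) (\<lambda>t. t)"
begin

lemma reward_measurable [measurable]: "w \<in> borel_measurable borel"
  using borel_measurable_integrable[OF integrable_reward[of 0]]
  by (subst (asm) measurable_cong_sets[OF sets_F refl])

lemma prob_space_PiM_F: "prob_space (PiM I F)"
  by (intro prob_space_PiM prob_space_F)

lemma integrable_const_F: "integrable (F i) (\<lambda>_. a)"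
  using prob_space_F[of i] by (simp add: prob_space.finite_measure finite_measure.integrable_const)

lemma component_measurable:
  assumes "j \<in> I"
  shows "(\<lambda>y. y j) \<in> borel_measurable (PiM I F)"
  using measurable_component_singleton[OF assms, of F]
    measurable_cong_sets[OF refl sets_F, of "PiM I F" j] by simp

lemma integrable_mono_nonexpansive_max:
  assumes "mono_nonexpansive f"
  shows "integrable (F i) (\<lambda>t. f (max m (w t)))"
proof (rule Bochner_Integration.integrable_bound)
  show "integrable (F i) (\<lambda>t. \<bar>f m\<bar> + \<bar>w t\<bar> + \<bar>m\<bar>)"
    by (intro Bochner_Integration.integrable_add integrable_abs integrable_reward integrable_const_F)
  have [measurable]: "f \<in> borel_measurable borel" by (rule mono_nonexpansive_measurable[OF assms])
  show "(\<lambda>t. f (max m (w t))) \<in> borel_measurable (F i)"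
    unfolding measurable_cong_sets[OF sets_F refl] by measurable
  have "f m \<le> f (max m (w t))" "f (max m (w t)) \<le> f m + (max m (w t) - m)" for t
    using mono_nonexpansiveD[OF assms, of m "max m (w t)"] by auto
  moreover have "max m (w t) - m \<le> \<bar>w t\<bar> + \<bar>m\<bar>" for t by linarith
  ultimately show "AE t in F i. norm (f (max m (w t))) \<le> norm (\<bar>f m\<bar> + \<bar>w t\<bar> + \<bar>m\<bar>)"
    by (intro AE_I2) (smt (verit) real_norm_def)
qed

definition open_value :: "(real \<Rightarrow> real) \<Rightarrow> nat \<Rightarrow> real \<Rightarrow> real" where
  "open_value f i m = (\<integral>t. f (max m (w t)) \<partial>F i) - c i"

lemma mono_nonexpansive_open_value:
  assumes f: "mono_nonexpansive f"
  shows "mono_nonexpansive (open_value f i)"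
proof (rule mono_nonexpansiveI)
  fix m m' :: real assume "m \<le> m'"
  note int = integrable_mono_nonexpansive_max[OF f]
  note mn = mono_nonexpansiveD[OF mono_nonexpansive_max[OF f] \<open>m \<le> m'\<close>]
  show "open_value f i m \<le> open_value f i m'"
    unfolding open_value_def using mn(1) int by (auto intro!: integral_mono)
  have "(\<integral>t. f (max m' (w t)) \<partial>F i) \<le> (\<integral>t. f (max m (w t)) + (m' - m) \<partial>F i)"
    by (intro integral_mono Bochner_Integration.integrable_add int integrable_const_F mn(2))
  also have "\<dots> = (\<integral>t. f (max m (w t)) \<partial>F i) + (m' - m)"
    using int prob_space.prob_space[OF prob_space_F] integrable_const_F
    by (subst Bochner_Integration.integral_add) auto
  finally show "open_value f i m' \<le> open_value f i m + (m' - m)"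
    unfolding open_value_def by simp
qed

fun value_fuel :: "nat \<Rightarrow> nat set \<Rightarrow> real \<Rightarrow> real" where
  "value_fuel 0 R m = m"
| "value_fuel (Suc k) R m = Max (insert m ((\<lambda>i. open_value (value_fuel k (R - {i})) i m) ` R))"

lemma mono_nonexpansive_value_fuel: "finite R \<Longrightarrow> mono_nonexpansive (value_fuel k R)"
proof (induction k arbitrary: R)
  case 0 then show ?case by (simp add: mono_nonexpansive_id)
next
  case (Suc k)
  then show ?case
    unfolding value_fuel.simps
    by (intro mono_nonexpansive_Max_insert mono_nonexpansive_open_value Suc.IH) auto
qed

text \<open>The Bellman value of the search problem: the agent's optimal expected payoff, gross of
  the costs already sunk, when the projects in \<open>R\<close> are unopened and the best reward in hand is \<open>m\<close>.\<close>
definition search_value :: "nat set \<Rightarrow> real \<Rightarrow> real" where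
  "search_value R m = value_fuel (card R) R m"

definition continuation_value :: "nat set \<Rightarrow> real \<Rightarrow> nat \<Rightarrow> real" where
  "continuation_value R m i = open_value (search_value (R - {i})) i m"

lemma search_value_rec:
  assumes "finite R"
  shows "search_value R m = Max (insert m (continuation_value R m ` R))"
proof (cases "R = {}")
  case False
  with assms obtain k where k: "card R = Suc k" by (cases "card R") auto
  have "card (R - {i}) = k" if "i \<in> R" for i using k assms that by simp
  then show ?thesis unfolding search_value_def k value_fuel.simps continuation_value_def
    by (intro arg_cong[where f=Max] arg_cong[where f="insert m"] image_cong) auto
qed (simp add: search_value_def)

lemma mono_nonexpansive_search_value: "finite R \<Longrightarrow> mono_nonexpansive (search_value R)"
  unfolding search_value_def[abs_def] by (rule mono_nonexpansive_value_fuel)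

lemma search_value_ge: "finite R \<Longrightarrow> m \<le> search_value R m"
  by (simp add: search_value_rec)

lemma integrable_search_value: "finite R \<Longrightarrow> integrable (F j) (\<lambda>t. search_value R (max m (w t)))"
  by (intro integrable_mono_nonexpansive_max mono_nonexpansive_search_value)

lemma mono_nonexpansive_continuation_value:
  "finite R \<Longrightarrow> mono_nonexpansive (\<lambda>m. continuation_value R m i)"
  unfolding continuation_value_def
  by (intro mono_nonexpansive_open_value mono_nonexpansive_search_value) simp

lemma integrable_search_value_diff:
  "finite R \<Longrightarrow> integrable (F i) (\<lambda>t. search_value (R - {i}) (max m (w t)) - C)"
  by (intro Bochner_Integration.integrable_diff integrable_search_value integrable_const_F) simp

lemma integral_search_value_diff:
  assumes "finite R"
  shows "(\<integral>t. search_value (R - {i}) (max m (w t)) - (C + c i) \<partial>F i) = continuation_value R m i - C"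
  using integrable_search_value[of "R - {i}" i m] assms integrable_const_F
    prob_space.prob_space[OF prob_space_F]
  unfolding continuation_value_def open_value_def by (subst Bochner_Integration.integral_diff) auto

lemma run_Open_fibers:
  fixes \<Phi> :: "history \<times> real \<Rightarrow> real"
  assumes v: "valid_strategy n \<tau>" and Open: "\<tau> h = Open i"
    and int: "integrable (PiM (unopened n h) F) (\<lambda>y. \<Phi> (run \<tau> y (Suc k) h))"
  shows "i \<in> unopened n h"
    and "AE t in F i. integrable (PiM (unopened n h - {i}) F) (\<lambda>y. \<Phi> (run \<tau> y k (h @ [(i,t)])))"
    and "integrable (F i) (\<lambda>t. \<integral>y. \<Phi> (run \<tau> y k (h @ [(i,t)])) \<partial>PiM (unopened n h - {i}) F)"
    and "(\<integral>y. \<Phi> (run \<tau> y (Suc k) h) \<partial>PiM (unopened n h) F) =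
         (\<integral>t. (\<integral>y. \<Phi> (run \<tau> y k (h @ [(i,t)])) \<partial>PiM (unopened n h - {i}) F) \<partial>F i)"
proof -
  show i: "i \<in> unopened n h" using valid_OpenD[OF v Open] by auto
  define J where "J = unopened n h - {i}"
  have R: "unopened n h = insert i J" using i unfolding J_def by auto
  have J: "finite J" "i \<notin> J" unfolding J_def by auto
  note S = PiM_insert_fibers[OF prob_space_F J int[unfolded R]]
  note step = run_Open[OF v Open]
  show "AE t in F i. integrable (PiM (unopened n h - {i}) F) (\<lambda>y. \<Phi> (run \<tau> y k (h @ [(i,t)])))"
    using S(1) unfolding step J_def .
  show "integrable (F i) (\<lambda>t. \<integral>y. \<Phi> (run \<tau> y k (h @ [(i,t)])) \<partial>PiM (unopened n h - {i}) F)"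
    using S(2) unfolding step J_def .
  show "(\<integral>y. \<Phi> (run \<tau> y (Suc k) h) \<partial>PiM (unopened n h) F) =
         (\<integral>t. (\<integral>y. \<Phi> (run \<tau> y k (h @ [(i,t)])) \<partial>PiM (unopened n h - {i}) F) \<partial>F i)"
    using S(3) unfolding step R[symmetric] by (simp only: J_def)
qed

lemma agent_payoff_le_search_value:
  assumes v: "valid_strategy n \<tau>"
  shows "card (unopened n h) < k \<Longrightarrow>
    integrable (PiM (unopened n h) F) (\<lambda>y. agent_payoff w c (run \<tau> y k h)) \<Longrightarrow>
    (\<integral>y. agent_payoff w c (run \<tau> y k h) \<partial>PiM (unopened n h) F)
      \<le> search_value (unopened n h) (max_reward w h) - (\<Sum>j\<in>fst ` set h. c j)"
proof (induction k arbitrary: h)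
  case (Suc k)
  interpret P: prob_space "PiM (unopened n h) F" by (rule prob_space_PiM_F)
  let ?m = "max_reward w h" and ?C = "\<Sum>j\<in>fst ` set h. c j"
  show ?case
  proof (cases "\<tau> h")
    case (Present p)
    have "w p \<le> ?m" by (rule max_reward_ge[OF valid_PresentD[OF v Present]])
    also have "\<dots> \<le> search_value (unopened n h) ?m" by (simp add: search_value_ge)
    finally show ?thesis using Present by (simp add: agent_payoff_def P.prob_space)
  next
    case (Open i)
    note S = run_Open_fibers[OF v Open Suc.prems(2)]
    have inh: "i \<notin> fst ` set h" using S(1) by auto
    have "AE t in F i. (\<integral>y. agent_payoff w c (run \<tau> y k (h @ [(i,t)])) \<partial>PiM (unopened n h - {i}) F)
        \<le> search_value (unopened n h - {i}) (max ?m (w t)) - (?C + c i)"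
      using S(2)
    proof eventually_elim
      case (elim t)
      with Suc.IH[of "h @ [(i,t)]"] card_unopened_snoc[OF S(1) Suc.prems(1)]
      show ?case unfolding unopened_snoc max_reward_snoc sum_opened_snoc[OF inh] by simp
    qed
    then have "(\<integral>y. agent_payoff w c (run \<tau> y (Suc k) h) \<partial>PiM (unopened n h) F)
        \<le> (\<integral>t. search_value (unopened n h - {i}) (max ?m (w t)) - (?C + c i) \<partial>F i)"
      unfolding S(4) by (rule integral_mono_AE[OF S(3) integrable_search_value_diff[OF finite_unopened]])
    also have "\<dots> = continuation_value (unopened n h) ?m i - ?C"
      by (simp add: integral_search_value_diff)
    also have "continuation_value (unopened n h) ?m i \<le> search_value (unopened n h) ?m"
      using S(1) by (simp add: search_value_rec)
    finally show ?thesis by simp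
  qed
qed simp

text \<open>\<open>LEAST\<close> makes the choice among equally good projects deterministic and measurable.\<close>
definition opt_strategy :: "nat \<Rightarrow> strategy" where
  "opt_strategy n h =
    (let R = unopened n h; m = max_reward w h; C = continuation_value R m in
     if R \<noteq> {} \<and> m \<le> Max (C ` R) then Open (LEAST i. i \<in> R \<and> C i = Max (C ` R))
     else Present (best_prize w h))"

lemma opt_strategy_Open:
  assumes "opt_strategy n h = Open i"
  shows "i \<in> unopened n h"
    and "search_value (unopened n h) (max_reward w h) = continuation_value (unopened n h) (max_reward w h) i"
proof -
  define R where "R = unopened n h"
  define C where "C = continuation_value R (max_reward w h)"
  have fin: "finite R" unfolding R_def by auto
  have cond: "R \<noteq> {}" "max_reward w h \<le> Max (C ` R)"
   and i: "i = (LEAST i. i \<in> R \<and> C i = Max (C ` R))"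
    using assms unfolding opt_strategy_def R_def C_def Let_def by (auto split: if_splits)
  have "\<exists>i. i \<in> R \<and> C i = Max (C ` R)"
    using Max_in[of "C ` R"] fin cond by fastforce
  then have iR: "i \<in> R" and Ci: "C i = Max (C ` R)"
    unfolding i by (rule LeastI2_ex, blast)+
  show "i \<in> unopened n h" using iR unfolding R_def .
  have "search_value R (max_reward w h) = max (max_reward w h) (Max (C ` R))"
    using fin cond by (simp add: search_value_rec C_def)
  also have "\<dots> = C i" using cond Ci by simp
  finally show "search_value (unopened n h) (max_reward w h) = continuation_value (unopened n h) (max_reward w h) i"
    unfolding R_def C_def .
qed

lemma opt_strategy_Present:
  assumes "opt_strategy n h = Present p"
  shows "p = best_prize w h"
    and "j \<in> unopened n h \<Longrightarrow> continuation_value (unopened n h) (max_reward w h) j < max_reward w h"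
    and "search_value (unopened n h) (max_reward w h) = max_reward w h"
proof -
  define R where "R = unopened n h"
  define C where "C = continuation_value R (max_reward w h)"
  have fin: "finite R" unfolding R_def by auto
  have stop: "R = {} \<or> Max (C ` R) < max_reward w h" and "p = best_prize w h"
    using assms unfolding opt_strategy_def R_def C_def Let_def by (auto split: if_splits)
  then show "p = best_prize w h" by simp
  show "continuation_value (unopened n h) (max_reward w h) j < max_reward w h"
    if "j \<in> unopened n h"
  proof -
    have "C j \<le> Max (C ` R)" using fin that unfolding R_def by (intro Max_ge) auto
    moreover have "R \<noteq> {}" using that unfolding R_def by auto
    ultimately have "C j < max_reward w h" using stop by auto
    then show ?thesis unfolding C_def R_def .
  qed
  have "search_value R (max_reward w h) = Max (insert (max_reward w h) (C ` R))"
    using search_value_rec[OF fin] unfolding C_def .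
  also have "\<dots> = max_reward w h"
  proof (cases "R = {}")
    case False
    with stop have "Max (C ` R) < max_reward w h" by simp
    then show ?thesis using fin False by (simp add: Max_insert)
  qed simp
  finally show "search_value (unopened n h) (max_reward w h) = max_reward w h"
    unfolding R_def .
qed

lemma valid_opt_strategy: "valid_strategy n (opt_strategy n)"
  unfolding valid_strategy_def
proof (intro allI conjI impI)
  fix h i assume "opt_strategy n h = Open i"
  from opt_strategy_Open(1)[OF this] show "i \<le> n" "i \<notin> fst ` set h" by simp_all
next
  fix h p assume "opt_strategy n h = Present p"
  from opt_strategy_Present(1)[OF this] best_prize_mem[of w h] show "p = 0 \<or> p \<in> snd ` set h"
    by simp
qed

lemma agent_payoff_opt_strategy:
  "card (unopened n h) < k \<Longrightarrow>
    integrable (PiM (unopened n h) F) (\<lambda>y. agent_payoff w c (run (opt_strategy n) y k h)) \<Longrightarrow>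
    (\<integral>y. agent_payoff w c (run (opt_strategy n) y k h) \<partial>PiM (unopened n h) F)
      = search_value (unopened n h) (max_reward w h) - (\<Sum>j\<in>fst ` set h. c j)"
proof (induction k arbitrary: h)
  case (Suc k)
  interpret P: prob_space "PiM (unopened n h) F" by (rule prob_space_PiM_F)
  let ?m = "max_reward w h" and ?C = "\<Sum>j\<in>fst ` set h. c j"
  show ?case
  proof (cases "opt_strategy n h")
    case (Present p)
    with opt_strategy_Present[OF Present] show ?thesis
      by (simp add: agent_payoff_def P.prob_space reward_best_prize)
  next
    case (Open i)
    note S = run_Open_fibers[OF valid_opt_strategy Open Suc.prems(2)]
    have inh: "i \<notin> fst ` set h" using S(1) by auto
    have "AE t in F i. (\<integral>y. agent_payoff w c (run (opt_strategy n) y k (h @ [(i,t)])) \<partial>PiM (unopened n h - {i}) F)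
        = search_value (unopened n h - {i}) (max ?m (w t)) - (?C + c i)"
      using S(2)
    proof eventually_elim
      case (elim t)
      with Suc.IH[of "h @ [(i,t)]"] card_unopened_snoc[OF S(1) Suc.prems(1)]
      show ?case unfolding unopened_snoc max_reward_snoc sum_opened_snoc[OF inh] by simp
    qed
    then have "(\<integral>y. agent_payoff w c (run (opt_strategy n) y (Suc k) h) \<partial>PiM (unopened n h) F)
        = (\<integral>t. search_value (unopened n h - {i}) (max ?m (w t)) - (?C + c i) \<partial>F i)"
      unfolding S(4)
      by (rule integral_cong_AE[OF borel_measurable_integrable[OF S(3)]
            borel_measurable_integrable[OF integrable_search_value_diff[OF finite_unopened]]])
    also have "\<dots> = continuation_value (unopened n h) ?m i - ?C"
      by (simp add: integral_search_value_diff)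
    also have "continuation_value (unopened n h) ?m i = search_value (unopened n h) ?m"
      using opt_strategy_Open(2)[OF Open] by simp
    finally show ?thesis .
  qed
qed simp

end

definition history_of :: "nat list \<Rightarrow> (nat \<Rightarrow> real) \<Rightarrow> history" where
  "history_of L y = map (\<lambda>j. (j, y j)) L"

fun action_index :: "action \<Rightarrow> nat option" where
  "action_index (Open i) = Some i"
| "action_index (Present p) = None"

fun action_prize :: "action \<Rightarrow> real" where
  "action_prize (Open i) = 0"
| "action_prize (Present p) = p"

lemma run_measurable:
  assumes v: "valid_strategy n \<sigma>"
    and index: "\<And>L. set L \<subseteq> {0..n} \<Longrightarrow>
      (\<lambda>y. action_index (\<sigma> (history_of L y))) \<in> measurable M (count_space UNIV)"
    and prize: "\<And>L. set L \<subseteq> {0..n} \<Longrightarrow>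
      (\<lambda>y. action_prize (\<sigma> (history_of L y))) \<in> borel_measurable M"
  shows "set L \<subseteq> {0..n} \<Longrightarrow>
      (\<lambda>y. map fst (fst (run \<sigma> y k (history_of L y)))) \<in> measurable M (count_space UNIV)
    \<and> (\<lambda>y. snd (run \<sigma> y k (history_of L y))) \<in> borel_measurable M"
proof (induction k arbitrary: L)
  case 0
  have "map fst (history_of L y) = L" for y by (simp add: history_of_def comp_def)
  then show ?case by simp
next
  case (Suc k)
  define G where "G = (\<lambda>a y. case a of None \<Rightarrow> L
    | Some i \<Rightarrow> if i \<le> n then map fst (fst (run \<sigma> y k (history_of (L @ [i]) y))) else [])"
  define H where "H = (\<lambda>a y. case a of None \<Rightarrow> action_prize (\<sigma> (history_of L y))
    | Some i \<Rightarrow> if i \<le> n then snd (run \<sigma> y k (history_of (L @ [i]) y)) else 0)"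
  have eq: "map fst (fst (run \<sigma> y (Suc k) (history_of L y))) = G (action_index (\<sigma> (history_of L y))) y \<and>
            snd (run \<sigma> y (Suc k) (history_of L y)) = H (action_index (\<sigma> (history_of L y))) y" for y
  proof (cases "\<sigma> (history_of L y)")
    case (Open i)
    moreover have "history_of L y @ [(i, y i)] = history_of (L @ [i]) y" by (simp add: history_of_def)
    ultimately show ?thesis using valid_OpenD[OF v Open] by (simp add: G_def H_def)
  next
    case (Present p)
    then show ?thesis by (simp add: G_def H_def history_of_def comp_def)
  qed
  have "(\<lambda>y. G a y) \<in> measurable M (count_space UNIV) \<and> (\<lambda>y. H a y) \<in> borel_measurable M" for a
  proof (cases a)
    case (Some i)
    with Suc show ?thesis by (cases "i \<le> n") (simp_all add: G_def H_def)
  qed (use prize[OF Suc.prems] in \<open>simp add: G_def H_def\<close>)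
  then have "(\<lambda>y. G (action_index (\<sigma> (history_of L y))) y) \<in> measurable M (count_space UNIV)"
    "(\<lambda>y. H (action_index (\<sigma> (history_of L y))) y) \<in> borel_measurable M"
    by (blast intro: measurable_compose_countable[OF _ index[OF Suc.prems]])+
  with eq show ?case by simp
qed

context search_model
begin

lemma history_of_measurable:
  "set L \<subseteq> I \<Longrightarrow> (\<lambda>y. max_reward w (history_of L y)) \<in> borel_measurable (PiM I F)
    \<and> (\<lambda>y. best_prize w (history_of L y)) \<in> borel_measurable (PiM I F)"
proof (induction L)
  case Nil then show ?case by (simp add: history_of_def)
next
  case (Cons j L)
  define yj where "yj = (\<lambda>y::nat \<Rightarrow> real. y j)"
  have [measurable]: "(\<lambda>y. max_reward w (history_of L y)) \<in> borel_measurable (PiM I F)"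
    "(\<lambda>y. best_prize w (history_of L y)) \<in> borel_measurable (PiM I F)"
    "yj \<in> borel_measurable (PiM I F)"
    using Cons component_measurable unfolding yj_def by auto
  have "history_of (j # L) y = (j, yj y) # history_of L y" for y by (simp add: history_of_def yj_def)
  then have eq: "max_reward w (history_of (j # L) y) = max (w (yj y)) (max_reward w (history_of L y))"
    "best_prize w (history_of (j # L) y) =
      (if w (best_prize w (history_of L y)) < w (yj y) \<or>
          (w (best_prize w (history_of L y)) = w (yj y) \<and> best_prize w (history_of L y) < yj y)
       then yj y else best_prize w (history_of L y))" for y
    by (simp_all add: Let_def)
  let ?b = "\<lambda>y. best_prize w (history_of L y)"
  have "(\<lambda>y. w (?b y)) \<in> borel_measurable (PiM I F)" "(\<lambda>y. w (yj y)) \<in> borel_measurable (PiM I F)"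
    by measurable
  note [measurable] = borel_measurable_less[OF this] borel_measurable_eq[OF this]
    borel_measurable_less[of ?b "PiM I F" yj]
  show ?case unfolding eq by (intro conjI; measurable)
qed

lemma opt_strategy_measurable:
  assumes L: "set L \<subseteq> {0..n}"
  shows "(\<lambda>y. action_index (opt_strategy n (history_of L y))) \<in> measurable (PiM {0..n} F) (count_space UNIV)"
    and "(\<lambda>y. action_prize (opt_strategy n (history_of L y))) \<in> borel_measurable (PiM {0..n} F)"
proof -
  define R where "R = {0..n} - set L"
  have finR: "finite R" unfolding R_def by auto
  have [measurable]: "(\<lambda>m. continuation_value R m i) \<in> borel_measurable borel" for i
    by (rule mono_nonexpansive_measurable[OF mono_nonexpansive_continuation_value[OF finR]])
  have [measurable]: "(\<lambda>m. Max (continuation_value R m ` R)) \<in> borel_measurable borel"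
    using borel_measurable_Max[OF finR, of "\<lambda>i m. continuation_value R m i" borel] by simp
  have [measurable]: "(\<lambda>y. max_reward w (history_of L y)) \<in> borel_measurable (PiM {0..n} F)"
    "(\<lambda>y. best_prize w (history_of L y)) \<in> borel_measurable (PiM {0..n} F)"
    using history_of_measurable[OF L] by auto
  have fsh: "fst ` set (history_of L y) = set L" for y by (force simp: history_of_def)
  define choice where "choice = (\<lambda>m. if R \<noteq> {} \<and> m \<le> Max (continuation_value R m ` R)
    then Some (LEAST i. i \<in> R \<and> continuation_value R m i = Max (continuation_value R m ` R)) else None)"
  have "action_index (opt_strategy n (history_of L y)) = choice (max_reward w (history_of L y))" for y
    unfolding opt_strategy_def fsh R_def[symmetric] choice_def Let_def by simp
  moreover have "choice \<in> measurable borel (count_space UNIV)"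
    unfolding choice_def
  proof (rule measurable_If)
    have "(\<lambda>m. LEAST i. i \<in> R \<and> continuation_value R m i = Max (continuation_value R m ` R))
        \<in> measurable borel (count_space UNIV)"
      by measurable
    from measurable_compose[OF this measurable_count_space, of Some]
    show "(\<lambda>m. Some (LEAST i. i \<in> R \<and> continuation_value R m i = Max (continuation_value R m ` R)))
        \<in> measurable borel (count_space UNIV)"
      by (simp add: comp_def)
    show "{m \<in> space borel. R \<noteq> {} \<and> m \<le> Max (continuation_value R m ` R)} \<in> sets borel"
      by measurable
  qed simp
  ultimately show "(\<lambda>y. action_index (opt_strategy n (history_of L y))) \<in> measurable (PiM {0..n} F) (count_space UNIV)"
    by simp
  have prize: "action_prize (opt_strategy n (history_of L y)) =
      (if R \<noteq> {} \<and> max_reward w (history_of L y) \<le> Max (continuation_value R (max_reward w (history_of L y)) ` R)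
       then 0 else best_prize w (history_of L y))" for y
    unfolding opt_strategy_def fsh R_def[symmetric] Let_def by simp
  show "(\<lambda>y. action_prize (opt_strategy n (history_of L y))) \<in> borel_measurable (PiM {0..n} F)"
    unfolding prize by measurable
qed

lemma integrable_run_Nil_presented:
  fixes f :: "real \<Rightarrow> real"
  assumes v: "valid_strategy n \<tau>"
    and presented: "(\<lambda>y. snd (run \<tau> y k [])) \<in> borel_measurable (PiM {0..n} F)"
    and f: "f \<in> borel_measurable borel" "\<And>i. integrable (F i) f"
  shows "integrable (PiM {0..n} F) (\<lambda>y. f (snd (run \<tau> y k [])))"
proof (rule Bochner_Integration.integrable_bound)
  interpret P: prob_space "PiM {0..n} F" by (rule prob_space_PiM_F)
  show "integrable (PiM {0..n} F) (\<lambda>y. \<bar>f 0\<bar> + (\<Sum>j\<in>{0..n}. \<bar>f (y j)\<bar>))"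
    using integrable_PiM_component[OF prob_space_F _ integrable_abs[OF f(2)]]
    by (intro Bochner_Integration.integrable_add integrable_sum) auto
  show "(\<lambda>y. f (snd (run \<tau> y k []))) \<in> borel_measurable (PiM {0..n} F)"
    using measurable_compose[OF presented f(1)] .
  have "\<bar>f (snd (run \<tau> y k []))\<bar> \<le> \<bar>f 0\<bar> + (\<Sum>j\<in>{0..n}. \<bar>f (y j)\<bar>)" for y
  proof -
    have nonneg: "0 \<le> (\<Sum>j\<in>{0..n}. \<bar>f (y j)\<bar>)" by (simp add: sum_nonneg)
    from run_Nil_presented[OF v, of y k] show ?thesis
    proof
      assume "\<exists>j \<in> fst ` set (fst (run \<tau> y k [])). snd (run \<tau> y k []) = y j"
      then obtain j where j: "j \<in> fst ` set (fst (run \<tau> y k []))" "snd (run \<tau> y k []) = y j"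
        by blast
      with run_Nil_opened[OF v, of y k] have "\<bar>f (y j)\<bar> \<le> (\<Sum>j\<in>{0..n}. \<bar>f (y j)\<bar>)"
        by (intro member_le_sum) auto
      then show ?thesis using j(2) by simp
    qed (use nonneg in simp)
  qed
  then show "AE y in PiM {0..n} F. norm (f (snd (run \<tau> y k []))) \<le> norm (\<bar>f 0\<bar> + (\<Sum>j\<in>{0..n}. \<bar>f (y j)\<bar>))"
    by (intro AE_I2) (simp add: sum_nonneg)
qed

lemma
  assumes v: "valid_strategy n \<tau>"
    and presented: "(\<lambda>y. snd (run \<tau> y k [])) \<in> borel_measurable (PiM {0..n} F)"
    and opened: "(\<lambda>y. fst ` set (fst (run \<tau> y k []))) \<in> measurable (PiM {0..n} F) (count_space UNIV)"
  shows integrable_agent_payoff: "integrable (PiM {0..n} F) (\<lambda>y. agent_payoff w c (run \<tau> y k []))"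
    and integrable_principal_payoff: "integrable (PiM {0..n} F) (\<lambda>y. principal_payoff w (run \<tau> y k []))"
proof -
  interpret P: prob_space "PiM {0..n} F" by (rule prob_space_PiM_F)
  have cost: "integrable (PiM {0..n} F) (\<lambda>y. \<Sum>j\<in>fst ` set (fst (run \<tau> y k [])). c j)"
  proof (rule Bochner_Integration.integrable_bound)
    show "(\<lambda>y. \<Sum>j\<in>fst ` set (fst (run \<tau> y k [])). c j) \<in> borel_measurable (PiM {0..n} F)"
      using measurable_compose[OF opened, of "\<lambda>S. \<Sum>j\<in>S. c j" borel] by simp
    have "\<bar>\<Sum>j\<in>fst ` set (fst (run \<tau> y k [])). c j\<bar> \<le> (\<Sum>j\<in>{0..n}. \<bar>c j\<bar>)" for y
    proof -
      have "\<bar>\<Sum>j\<in>fst ` set (fst (run \<tau> y k [])). c j\<bar> \<le> (\<Sum>j\<in>fst ` set (fst (run \<tau> y k [])). \<bar>c j\<bar>)"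
        by (rule sum_abs)
      also have "\<dots> \<le> (\<Sum>j\<in>{0..n}. \<bar>c j\<bar>)"
        using run_Nil_opened[OF v] by (intro sum_mono2) auto
      finally show ?thesis .
    qed
    then show "AE y in PiM {0..n} F. norm (\<Sum>j\<in>fst ` set (fst (run \<tau> y k [])). c j) \<le> norm (\<Sum>j\<in>{0..n}. \<bar>c j\<bar>)"
      by (intro AE_I2) (simp add: sum_nonneg)
  qed (rule P.integrable_const)
  have "integrable (PiM {0..n} F) (\<lambda>y. w (snd (run \<tau> y k [])))"
    by (rule integrable_run_Nil_presented[OF v presented reward_measurable integrable_reward])
  from Bochner_Integration.integrable_diff[OF this cost]
  show "integrable (PiM {0..n} F) (\<lambda>y. agent_payoff w c (run \<tau> y k []))"
    unfolding agent_payoff_def .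
  have "(\<lambda>t. t - w t) \<in> borel_measurable borel" by measurable
  moreover have "integrable (F i) (\<lambda>t. t - w t)" for i
    by (intro Bochner_Integration.integrable_diff integrable_prize integrable_reward)
  ultimately show "integrable (PiM {0..n} F) (\<lambda>y. principal_payoff w (run \<tau> y k []))"
    unfolding principal_payoff_def by (rule integrable_run_Nil_presented[OF v presented])
qed

end

section \<open>Expected excess and the index of a project\<close>

definition excess :: "(real \<Rightarrow> real) \<Rightarrow> real measure \<Rightarrow> real \<Rightarrow> real" where
  "excess w M r = (\<integral>t. max 0 (w t - r) \<partial>M)"

context
  fixes w :: "real \<Rightarrow> real" and M :: "real measure"
  assumes M: "prob_space M" and w: "integrable M w"
begin

lemma integrable_excess_integrand: "integrable M (\<lambda>t. max 0 (w t - r))"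
  using w M by (intro integrable_max finite_measure.integrable_const prob_space.finite_measure
      Bochner_Integration.integrable_diff) auto

lemma excess_nonneg: "0 \<le> excess w M r"
  unfolding excess_def by (intro integral_nonneg_AE) auto

lemma excess_antimono: "r \<le> r' \<Longrightarrow> excess w M r' \<le> excess w M r"
  unfolding excess_def by (intro integral_mono integrable_excess_integrand) auto

lemma excess_le_add: "r \<le> r' \<Longrightarrow> excess w M r \<le> excess w M r' + (r' - r)"
proof -
  interpret prob_space M by (rule M)
  assume "r \<le> r'"
  then have "excess w M r \<le> (\<integral>t. max 0 (w t - r') + (r' - r) \<partial>M)"
    unfolding excess_def using integrable_excess_integrand by (intro integral_mono) auto
  also have "\<dots> = excess w M r' + (r' - r)"
    unfolding excess_def using integrable_excess_integrand by (simp add: prob_space)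
  finally show ?thesis .
qed

lemma continuous_excess: "continuous_on UNIV (excess w M)"
proof -
  have "\<bar>excess w M x - excess w M y\<bar> \<le> \<bar>x - y\<bar>" for x y
    using excess_antimono[of x y] excess_le_add[of x y] excess_antimono[of y x] excess_le_add[of y x]
    by (cases "x \<le> y") auto
  then have "1-lipschitz_on UNIV (excess w M)"
    by (intro lipschitz_onI) (auto simp: dist_real_def)
  then show ?thesis by (rule lipschitz_on_continuous_on)
qed

lemma excess_ge: "(\<integral>t. w t \<partial>M) - r \<le> excess w M r"
proof -
  interpret prob_space M by (rule M)
  have "(\<integral>t. w t \<partial>M) - r = (\<integral>t. w t - r \<partial>M)"
    using w by (simp add: prob_space)
  also have "\<dots> \<le> excess w M r"
    unfolding excess_def using w integrable_excess_integrand by (intro integral_mono) auto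
  finally show ?thesis .
qed

lemma nn_integral_eq_excess: "(\<integral>\<^sup>+ t. ennreal (w t - r) \<partial>M) = ennreal (excess w M r)"
proof -
  have "(\<integral>\<^sup>+ t. ennreal (w t - r) \<partial>M) = (\<integral>\<^sup>+ t. ennreal (max 0 (w t - r)) \<partial>M)"
    by (intro nn_integral_cong) (auto simp: max_def ennreal_neg)
  also have "\<dots> = ennreal (excess w M r)"
    unfolding excess_def by (rule nn_integral_eq_integral[OF integrable_excess_integrand]) auto
  finally show ?thesis .
qed

lemma excess_eq_AE_less:
  assumes "r < q" and eq: "excess w M r = excess w M q"
  shows "AE t in M. w t < q"
proof -
  let ?h = "\<lambda>t. max 0 (w t - r) - max 0 (w t - q)"
  have "integral\<^sup>L M ?h = 0"
    using eq integrable_excess_integrand unfolding excess_def by simp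
  moreover have "integrable M ?h" using integrable_excess_integrand by auto
  ultimately have "AE t in M. ?h t = 0"
    using integral_nonneg_eq_0_iff_AE[of M ?h] \<open>r < q\<close> by auto
  then show ?thesis
    by eventually_elim (use \<open>r < q\<close> in \<open>auto simp: max_def split: if_splits\<close>)
qed

lemma integral_max_eq_excess: "(\<integral>t. max q (w t) \<partial>M) = q + excess w M q"
proof -
  interpret prob_space M by (rule M)
  have "(\<integral>t. max q (w t) \<partial>M) = (\<integral>t. q + max 0 (w t - q) \<partial>M)"
    by (intro Bochner_Integration.integral_cong) (auto simp: max_def)
  also have "\<dots> = q + excess w M q"
    unfolding excess_def using integrable_excess_integrand by (simp add: prob_space)
  finally show ?thesis .
qed

end

context
  fixes w :: "real \<Rightarrow> real" and a0 :: project
  assumes M: "prob_space (fst a0)" and w: "integrable (fst a0) w" and cost: "0 \<le> snd a0"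
begin

lemma r_index_eq_Inf_excess: "r_index w a0 = Inf {ereal r | r. excess w (fst a0) r = snd a0}"
proof -
  have "ennreal (snd a0) = (\<integral>\<^sup>+ y. ennreal (w y - r) \<partial>fst a0) \<longleftrightarrow> excess w (fst a0) r = snd a0" for r
    unfolding nn_integral_eq_excess[OF M w]
    using excess_nonneg[OF M w, of r] cost by (auto simp: ennreal_inj)
  then show ?thesis unfolding r_index_def by simp
qed

lemma r_index_less:
  assumes lt: "excess w (fst a0) m < snd a0"
  shows "r_index w a0 < ereal m"
proof -
  let ?e = "excess w (fst a0)"
  define r1 where "r1 = min m ((\<integral>t. w t \<partial>fst a0) - snd a0)"
  have "snd a0 \<le> (\<integral>t. w t \<partial>fst a0) - r1" unfolding r1_def by simp
  also have "\<dots> \<le> ?e r1" by (rule excess_ge[OF M w])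
  finally have "\<exists>r. r1 \<le> r \<and> r \<le> m \<and> ?e r = snd a0"
    using lt continuous_on_subset[OF continuous_excess[OF M w]]
    by (intro IVT2') (auto simp: r1_def)
  then obtain r where r: "r \<le> m" "?e r = snd a0" by blast
  with lt have "r < m" by (cases "r = m") auto
  have "r_index w a0 \<le> ereal r"
    unfolding r_index_eq_Inf_excess using r by (intro Inf_lower) auto
  also have "\<dots> < ereal m" using \<open>r < m\<close> by simp
  finally show ?thesis .
qed

lemma r_index_lessE:
  assumes "r_index w a0 < ereal q"
  obtains r where "r < q" "excess w (fst a0) r = snd a0"
  using assms unfolding r_index_eq_Inf_excess Inf_less_iff by auto

end

section \<open>The principal's payoff under optimal search\<close>

context search_model
begin

lemma continuation_value_ge_excess:
  assumes "finite R"
  shows "m + excess w (F i) m - c i \<le> continuation_value R m i"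
proof -
  interpret prob_space "F i" by (rule prob_space_F)
  have "m + excess w (F i) m = (\<integral>t. m + max 0 (w t - m) \<partial>F i)"
    unfolding excess_def
    using integrable_excess_integrand[OF prob_space_F integrable_reward] by (simp add: prob_space)
  also have "\<dots> \<le> (\<integral>t. search_value (R - {i}) (max m (w t)) \<partial>F i)"
  proof (rule integral_mono)
    show "integrable (F i) (\<lambda>t. m + max 0 (w t - m))"
      using integrable_excess_integrand[OF prob_space_F integrable_reward] by simp
    show "integrable (F i) (\<lambda>t. search_value (R - {i}) (max m (w t)))"
      using assms by (intro integrable_search_value) simp
    have "m + max 0 (w t - m) = max m (w t)" for t by (simp add: max_def)
    also have "\<dots> t \<le> search_value (R - {i}) (max m (w t))" for t
      using assms by (intro search_value_ge) simp
    finally show "m + max 0 (w t - m) \<le> search_value (R - {i}) (max m (w t))" for t .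
  qed
  finally show ?thesis unfolding continuation_value_def open_value_def by simp
qed

lemma opt_strategy_Present_excess:
  assumes "opt_strategy n h = Present p" and "i \<in> unopened n h"
  shows "excess w (F i) (w p) < c i"
  using continuation_value_ge_excess[OF finite_unopened, of "max_reward w h" i n h]
    opt_strategy_Present(2)[OF assms] opt_strategy_Present(1)[OF assms(1)] reward_best_prize[of w h]
  by simp

end

locale doubly_monotone_search = search_model +
  assumes prize_nonneg: "AE t in F i. 0 \<le> t"
    and mono_reward: "mono_on {0..} w"
    and mono_principal: "mono_on {0..} (\<lambda>y. y - w y)"
begin

lemma principal_payoff_opt_strategy_ge_observed:
  assumes k: "card (unopened n h) < k"
    and nonneg_h: "\<forall>v \<in> snd ` set h. 0 \<le> v" and nonneg_y: "\<forall>j \<in> unopened n h. 0 \<le> y j"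
    and v: "v \<in> snd ` set h"
  shows "v - w v \<le> principal_payoff w (run (opt_strategy n) y k h)"
proof -
  let ?r = "run (opt_strategy n) y k h"
  have "opt_strategy n (fst ?r) = Present (snd ?r)"
    by (rule run_ends_Present[OF valid_opt_strategy k])
  then have presented: "snd ?r = best_prize w (fst ?r)" by (rule opt_strategy_Present(1))
  obtain h' where "fst ?r = h @ h'" using run_prefix by blast
  then have "v \<in> insert 0 (snd ` set (fst ?r))" using v by auto
  moreover have "\<forall>q \<in> snd ` set (fst ?r). 0 \<le> q"
    using run_mem[OF valid_opt_strategy, where y=y and k=k and h=h] nonneg_h nonneg_y by force
  ultimately show ?thesis
    unfolding principal_payoff_def presented
    by (intro best_prize_principal_max mono_reward mono_principal)
qed

lemma AE_PiM_nonneg: "finite I \<Longrightarrow> AE y in PiM I F. \<forall>j \<in> I. 0 \<le> y j"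
  by (intro eventually_ball_finite ballI AE_PiM_component prob_space_F prize_nonneg)

lemma integral_principal_payoff_opt_strategy_ge_observed:
  assumes k: "card (unopened n h) < k"
    and nonneg_h: "\<forall>v \<in> snd ` set h. 0 \<le> v" and v: "v \<in> snd ` set h"
    and int: "integrable (PiM (unopened n h) F) (\<lambda>y. principal_payoff w (run (opt_strategy n) y k h))"
  shows "v - w v \<le> (\<integral>y. principal_payoff w (run (opt_strategy n) y k h) \<partial>PiM (unopened n h) F)"
proof -
  interpret P: prob_space "PiM (unopened n h) F" by (rule prob_space_PiM_F)
  have "AE y in PiM (unopened n h) F. v - w v \<le> principal_payoff w (run (opt_strategy n) y k h)"
    using AE_PiM_nonneg[OF finite_unopened]
  proof eventually_elim
    case (elim y)
    then show ?case by (rule principal_payoff_opt_strategy_ge_observed[OF k nonneg_h _ v])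
  qed
  then have "(\<integral>y. v - w v \<partial>PiM (unopened n h) F)
      \<le> (\<integral>y. principal_payoff w (run (opt_strategy n) y k h) \<partial>PiM (unopened n h) F)"
    using int by (intro integral_mono_AE) auto
  then show ?thesis by (simp add: P.prob_space)
qed

text \<open>If the optimal search opens project 0 the principal gets at least \<open>y\<^sub>0 - w y\<^sub>0\<close>;
  if it stops with a best prize \<open>x\<close> before, the stopping rule bounds the excess of project 0
  over \<open>w x\<close>, so that \<open>x\<close> satisfies the hypothesis on \<open>B\<close>.\<close>
lemma principal_payoff_opt_strategy_ge:
  assumes B: "\<And>x. 0 \<le> x \<Longrightarrow> excess w (F 0) (w x) < c 0 \<Longrightarrow> B \<le> x - w x"
  shows "0 \<in> unopened n h \<Longrightarrow> \<forall>v \<in> snd ` set h. 0 \<le> v \<Longrightarrow> card (unopened n h) < k \<Longrightarrow>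
    integrable (PiM (unopened n h) F) (\<lambda>y. principal_payoff w (run (opt_strategy n) y k h)) \<Longrightarrow>
    min (\<integral>t. t - w t \<partial>F 0) B \<le> (\<integral>y. principal_payoff w (run (opt_strategy n) y k h) \<partial>PiM (unopened n h) F)"
proof (induction k arbitrary: h)
  case (Suc k)
  interpret P: prob_space "PiM (unopened n h) F" by (rule prob_space_PiM_F)
  let ?payoff = "\<lambda>h y. principal_payoff w (run (opt_strategy n) y k h)"
  show ?case
  proof (cases "opt_strategy n h")
    case (Present p)
    have "0 \<le> best_prize w h" using best_prize_mem[of w h] Suc.prems(2) by auto
    then have "B \<le> p - w p"
      using B opt_strategy_Present_excess[OF Present Suc.prems(1)] opt_strategy_Present(1)[OF Present]
      by simp
    then show ?thesis using Present by (simp add: principal_payoff_def P.prob_space)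
  next
    case (Open i)
    note S = run_Open_fibers[OF valid_opt_strategy Open Suc.prems(4)]
    have lower: "min (\<integral>t. t - w t \<partial>F 0) B \<le> (\<integral>t. (\<integral>y. ?payoff (h @ [(i,t)]) y \<partial>PiM (unopened n h - {i}) F) \<partial>F i)"
    proof (cases "i = 0")
      case True
      have "AE t in F i. t - w t \<le> (\<integral>y. ?payoff (h @ [(i,t)]) y \<partial>PiM (unopened n h - {i}) F)"
        using S(2) prize_nonneg[of i]
      proof eventually_elim
        case (elim t)
        then show ?case
          using integral_principal_payoff_opt_strategy_ge_observed[where h="h @ [(i,t)]" and v=t and k=k]
            card_unopened_snoc[OF S(1) Suc.prems(3)] Suc.prems(2)
          unfolding unopened_snoc by auto
      qed
      then have "(\<integral>t. t - w t \<partial>F i) \<le> (\<integral>t. (\<integral>y. ?payoff (h @ [(i,t)]) y \<partial>PiM (unopened n h - {i}) F) \<partial>F i)"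
        by (intro integral_mono_AE S(3) Bochner_Integration.integrable_diff integrable_prize integrable_reward)
      then show ?thesis unfolding True by (rule order_trans[OF min.cobounded1])
    next
      case False
      have "AE t in F i. min (\<integral>t. t - w t \<partial>F 0) B \<le> (\<integral>y. ?payoff (h @ [(i,t)]) y \<partial>PiM (unopened n h - {i}) F)"
        using S(2) prize_nonneg[of i]
      proof eventually_elim
        case (elim t)
        with Suc.IH[of "h @ [(i,t)]"] Suc.prems False card_unopened_snoc[OF S(1) Suc.prems(3)]
        show ?case unfolding unopened_snoc by auto
      qed
      then have "(\<integral>t. min (\<integral>t. t - w t \<partial>F 0) B \<partial>F i) \<le> (\<integral>t. (\<integral>y. ?payoff (h @ [(i,t)]) y \<partial>PiM (unopened n h - {i}) F) \<partial>F i)"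
        using S(3) integrable_const_F by (intro integral_mono_AE) auto
      then show ?thesis by (simp add: prob_space.prob_space[OF prob_space_F])
    qed
    then show ?thesis unfolding S(4) .
  qed
qed simp

end

section \<open>Finite families of projects\<close>

lemma integrable_contract:
  assumes a: "valid_project a" and "contract w" and "doubly_monotone w"
  shows "integrable (fst a) w"
proof (rule Bochner_Integration.integrable_bound)
  have M: "prob_space (fst a)" and S: "sets (fst a) = sets borel"
    and AE: "AE t in fst a. 0 \<le> t" and I: "integrable (fst a) (\<lambda>t. t)"
    using a unfolding valid_project_def by auto
  show "integrable (fst a) (\<lambda>t. t + w 0)"
    using I M by (intro Bochner_Integration.integrable_add finite_measure.integrable_const prob_space.finite_measure)
  show "w \<in> borel_measurable (fst a)"
    using \<open>contract w\<close> unfolding contract_def by (subst measurable_cong_sets[OF S refl]) simp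
  have "norm (w t) \<le> norm (t + w 0)" if "0 \<le> t" for t
  proof -
    have "mono_on {0..} (\<lambda>y. y - w y)" using \<open>doubly_monotone w\<close> unfolding doubly_monotone_def by simp
    from mono_onD[OF this, of 0 t] that have "0 - w 0 \<le> t - w t" by simp
    moreover have "0 \<le> w t" "0 \<le> w 0" using \<open>contract w\<close> that unfolding contract_def by simp_all
    ultimately show ?thesis by simp
  qed
  with AE show "AE t in fst a. norm (w t) \<le> norm (t + w 0)"
    by (auto elim: AE_mp)
qed

text \<open>Indices beyond \<open>n\<close> are padded with copies of project 0, so that the locale
  assumptions hold at every index; the product over \<open>{0..n}\<close> is unaffected.\<close>
definition prize_dists :: "nat \<Rightarrow> (nat \<Rightarrow> project) \<Rightarrow> nat \<Rightarrow> real measure" where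
  "prize_dists n a i = fst (a (if i \<le> n then i else 0))"

lemma prizes_eq_PiM_prize_dists: "prizes n a = PiM {0..n} (prize_dists n a)"
  unfolding prizes_def by (rule PiM_cong) (auto simp: prize_dists_def)

lemma doubly_monotone_search_prize_dists:
  assumes "\<forall>i\<le>n. valid_project (a i)" and "contract w" and "doubly_monotone w"
  shows "doubly_monotone_search w (prize_dists n a)"
proof -
  have "valid_project (a (if i \<le> n then i else 0))" for i using assms(1) by auto
  then show ?thesis
    using integrable_contract[OF _ assms(2,3)] assms(3)
    unfolding doubly_monotone_search_def doubly_monotone_search_axioms_def search_model_def
      prize_dists_def valid_project_def doubly_monotone_def
    by auto
qed

lemma agent_value_eq:
  "agent_value w n a \<tau> = (\<integral>y. agent_payoff w (\<lambda>i. snd (a i)) (run \<tau> y (n+2) []) \<partial>prizes n a)"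
  unfolding agent_value_def agent_payoff_def presented_def opened_def outcome_def ..

lemma principal_value_eq:
  "principal_value w n a \<tau> = (\<integral>y. principal_payoff w (run \<tau> y (n+2) []) \<partial>prizes n a)"
  unfolding principal_value_def principal_payoff_def presented_def outcome_def ..

lemma admissibleD:
  assumes "admissible n a \<tau>"
  shows "valid_strategy n \<tau>"
    and "(\<lambda>y. snd (run \<tau> y (n+2) [])) \<in> borel_measurable (PiM {0..n} (prize_dists n a))"
    and "(\<lambda>y. fst ` set (fst (run \<tau> y (n+2) []))) \<in> measurable (PiM {0..n} (prize_dists n a)) (count_space UNIV)"
  using assms unfolding admissible_def presented_def opened_def outcome_def prizes_eq_PiM_prize_dists
  by auto

context search_model
begin

lemma opt_strategy_run_measurable:
  "(\<lambda>y. snd (run (opt_strategy n) y k [])) \<in> borel_measurable (PiM {0..n} F)"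
  "(\<lambda>y. fst ` set (fst (run (opt_strategy n) y k []))) \<in> measurable (PiM {0..n} F) (count_space UNIV)"
proof -
  have "history_of [] y = []" for y by (simp add: history_of_def)
  with run_measurable[OF valid_opt_strategy opt_strategy_measurable(1) opt_strategy_measurable(2), where L="[]" and k=k]
  have "(\<lambda>y. map fst (fst (run (opt_strategy n) y k []))) \<in> measurable (PiM {0..n} F) (count_space UNIV)"
    and "(\<lambda>y. snd (run (opt_strategy n) y k [])) \<in> borel_measurable (PiM {0..n} F)"
    by simp_all
  from this(2) measurable_compose[OF this(1) measurable_count_space, of set]
  show "(\<lambda>y. snd (run (opt_strategy n) y k [])) \<in> borel_measurable (PiM {0..n} F)"
    "(\<lambda>y. fst ` set (fst (run (opt_strategy n) y k []))) \<in> measurable (PiM {0..n} F) (count_space UNIV)"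
    by (simp_all add: comp_def)
qed

lemma integral_agent_payoff_le_opt_strategy:
  assumes v: "valid_strategy n \<tau>"
    and presented: "(\<lambda>y. snd (run \<tau> y (n+2) [])) \<in> borel_measurable (PiM {0..n} F)"
    and opened: "(\<lambda>y. fst ` set (fst (run \<tau> y (n+2) []))) \<in> measurable (PiM {0..n} F) (count_space UNIV)"
  shows "(\<integral>y. agent_payoff w c (run \<tau> y (n+2) []) \<partial>PiM {0..n} F)
    \<le> (\<integral>y. agent_payoff w c (run (opt_strategy n) y (n+2) []) \<partial>PiM {0..n} F)"
proof -
  have "(\<integral>y. agent_payoff w c (run \<tau> y (n+2) []) \<partial>PiM {0..n} F) \<le> search_value {0..n} (w 0)"
    using agent_payoff_le_search_value[OF v, of "[]" "n+2"]
      integrable_agent_payoff[OF v presented opened] by (simp del: run.simps)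
  also have "\<dots> = (\<integral>y. agent_payoff w c (run (opt_strategy n) y (n+2) []) \<partial>PiM {0..n} F)"
    using agent_payoff_opt_strategy[of n "[]" "n+2"]
      integrable_agent_payoff[OF valid_opt_strategy opt_strategy_run_measurable] by (simp del: run.simps)
  finally show ?thesis .
qed

end

lemma opt_strategy_mem_opt_strats:
  assumes "search_model w (prize_dists n a)"
  shows "search_model.opt_strategy w (prize_dists n a) (\<lambda>i. snd (a i)) n \<in> opt_strats w n a"
proof -
  interpret search_model w "prize_dists n a" "\<lambda>i. snd (a i)" by (rule assms)
  have "admissible n a (opt_strategy n)"
    unfolding admissible_def presented_def opened_def outcome_def prizes_eq_PiM_prize_dists
    using valid_opt_strategy opt_strategy_run_measurable by (simp del: run.simps)
  moreover have "agent_value w n a \<tau> \<le> agent_value w n a (opt_strategy n)" if "admissible n a \<tau>" for \<tau>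
    unfolding agent_value_eq prizes_eq_PiM_prize_dists
    by (rule integral_agent_payoff_le_opt_strategy[OF admissibleD[OF that]])
  ultimately show ?thesis unfolding opt_strats_def by blast
qed

lemma VP_cond_ge:
  assumes va: "\<forall>i\<le>n. valid_project (a i)" and w: "contract w" "doubly_monotone w"
    and B: "\<And>x. 0 \<le> x \<Longrightarrow> excess w (fst (a 0)) (w x) < snd (a 0) \<Longrightarrow> B \<le> x - w x"
  shows "ereal (min (\<integral>t. t - w t \<partial>fst (a 0)) B) \<le> VP_cond w n a"
proof -
  interpret doubly_monotone_search w "prize_dists n a" "\<lambda>i. snd (a i)"
    by (rule doubly_monotone_search_prize_dists[OF va w])
  have F0: "prize_dists n a 0 = fst (a 0)" by (simp add: prize_dists_def)
  have "min (\<integral>t. t - w t \<partial>fst (a 0)) B \<le> principal_value w n a (opt_strategy n)"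
    unfolding principal_value_eq prizes_eq_PiM_prize_dists
    using principal_payoff_opt_strategy_ge[of B n "[]" "n+2"] B
      integrable_principal_payoff[OF valid_opt_strategy opt_strategy_run_measurable]
    by (simp add: F0 del: run.simps)
  also have "ereal \<dots> \<le> VP_cond w n a"
    unfolding VP_cond_def using opt_strategy_mem_opt_strats search_model_axioms by (intro SUP_upper)
  finally show ?thesis by simp
qed

section \<open>Adding a safe project\<close>

definition add_safe_project :: "project \<Rightarrow> real \<Rightarrow> nat \<Rightarrow> project" where
  "add_safe_project a0 x i = (if i = 0 then a0 else (return borel x, 0))"

lemma valid_project_safe:
  assumes "0 \<le> x"
  shows "valid_project (return borel x, 0)"
proof -
  have "AE y in return borel x. 0 \<le> y" by (subst AE_return) (use assms in auto)
  then show ?thesis unfolding valid_project_def fst_conv snd_conv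
    by (auto simp: prob_space_return integrable_iff_bounded nn_integral_return)
qed

lemma valid_add_safe_project:
  "valid_project a0 \<Longrightarrow> 0 \<le> x \<Longrightarrow> \<forall>i\<le>1. valid_project (add_safe_project a0 x i)"
  by (simp add: add_safe_project_def valid_project_safe)

definition take_safe_prize :: strategy where
  "take_safe_prize h = (if h = [] then Open 1 else Present (snd (hd h)))"

lemma
  assumes a0: "valid_project a0" and w: "contract w" "doubly_monotone w" and x: "0 \<le> x"
  shows admissible_take_safe_prize: "admissible 1 (add_safe_project a0 x) take_safe_prize"
    and agent_value_take_safe_prize: "agent_value w 1 (add_safe_project a0 x) take_safe_prize = w x"
proof -
  let ?F = "prize_dists 1 (add_safe_project a0 x)"
  interpret doubly_monotone_search w ?F "\<lambda>i. snd (add_safe_project a0 x i)"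
    by (rule doubly_monotone_search_prize_dists[OF valid_add_safe_project[OF a0 x] w])
  have run: "run take_safe_prize y (1+2) [] = ([(1, y 1)], y 1)" for y
    by (simp add: take_safe_prize_def numeral_eq_Suc)
  have "valid_strategy 1 take_safe_prize"
    unfolding valid_strategy_def take_safe_prize_def by (auto simp: hd_in_set image_iff)
  then show "admissible 1 (add_safe_project a0 x) take_safe_prize"
    unfolding admissible_def presented_def opened_def outcome_def prizes_eq_PiM_prize_dists run
    using component_measurable[of 1 "{0..1}"] by simp
  have "agent_value w 1 (add_safe_project a0 x) take_safe_prize = (\<integral>y. w (y 1) \<partial>PiM {0..1} ?F)"
    unfolding agent_value_eq run prizes_eq_PiM_prize_dists agent_payoff_def
    by (simp add: add_safe_project_def)
  also have "\<dots> = (\<integral>t. w t \<partial>?F 1)"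
    by (rule integral_PiM_component[OF prob_space_F _ integrable_reward]) simp
  also have "\<dots> = w x"
    by (simp add: prize_dists_def add_safe_project_def integral_return)
  finally show "agent_value w 1 (add_safe_project a0 x) take_safe_prize = w x" .
qed

context doubly_monotone_search
begin

lemma principal_payoff_le_safe_prize:
  assumes v: "valid_strategy 1 \<sigma>" and y: "y 1 = x" "0 \<le> x" "0 \<le> y 0"
    and opened_0: "0 \<in> fst ` set (fst (run \<sigma> y k [])) \<Longrightarrow> y 0 \<le> x"
  shows "principal_payoff w (run \<sigma> y k []) \<le> x - w x"
proof -
  have g: "q - w q \<le> x - w x" if "0 \<le> q" "q \<le> x" for q
    using mono_onD[OF mono_principal, of q x] that by simp
  from run_Nil_presented[OF v, of y k] show ?thesis
  proof
    assume "\<exists>j \<in> fst ` set (fst (run \<sigma> y k [])). snd (run \<sigma> y k []) = y j"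
    then obtain j where j: "j \<in> fst ` set (fst (run \<sigma> y k []))" "snd (run \<sigma> y k []) = y j"
      by blast
    with run_Nil_opened[OF v, of y k] have "j = 0 \<or> j = 1" by auto
    then show ?thesis
      using j g[of "y 0"] opened_0 y unfolding principal_payoff_def by auto
  qed (use g[of 0] y in \<open>simp add: principal_payoff_def\<close>)
qed

lemma principal_payoff_le_single_prize:
  assumes v: "valid_strategy 0 \<sigma>" and "0 \<le> y 0"
  shows "principal_payoff w (run \<sigma> y k []) \<le> y 0 - w (y 0)"
proof -
  have "0 - w 0 \<le> y 0 - w (y 0)" using mono_onD[OF mono_principal, of 0 "y 0"] assms(2) by simp
  then show ?thesis
    using run_Nil_presented[OF v, of y k] run_Nil_opened[OF v, of y k]
    unfolding principal_payoff_def by auto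
qed

lemma opens_0_eq:
  assumes v: "valid_strategy 1 \<sigma>" and "y 1 = x"
  shows "0 \<in> fst ` set (fst (run \<sigma> y k [])) \<longleftrightarrow>
    0 \<in> fst ` set (fst (run \<sigma> (\<lambda>i. if i = 1 then x else 0) k []))"
proof -
  have "0 \<in> fst ` set (fst (run \<sigma> y k [])) \<longleftrightarrow> 0 \<in> fst ` set (fst (run \<sigma> (y(0:=0)) k []))"
    by (rule run_opens_indep[OF v]) auto
  also have "run \<sigma> (y(0:=0)) k [] = run \<sigma> (\<lambda>i. if i = 1 then x else 0) k []"
    by (rule run_cong[OF v]) (use \<open>y 1 = x\<close> in auto)
  finally show ?thesis .
qed

lemma AE_safe_prize:
  assumes "F 1 = return borel x"
  shows "AE y in PiM {0..1} F. y 1 = x"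
proof (rule AE_PiM_component)
  show "AE t in F 1. t = x" unfolding assms by (subst AE_return) auto
qed (auto simp: prob_space_F)

lemma agent_payoff_le_opening_0:
  assumes v: "valid_strategy 1 \<sigma>" and c1: "c 1 = 0" and x: "0 \<le> x" and y: "y 1 = x"
    and opened_0: "0 \<in> fst ` set (fst (run \<sigma> y k []))"
  shows "agent_payoff w c (run \<sigma> y k []) \<le> max (w x) (w (y 0)) - c 0"
proof -
  let ?O = "fst ` set (fst (run \<sigma> y k []))"
  have O01: "?O \<subseteq> {0, 1}" using run_Nil_opened[OF v, of y k] by (auto simp: le_Suc_eq)
  have "S = {0} \<or> S = {0, 1}" if "0 \<in> S" "S \<subseteq> {0, 1::nat}" for S
    using that by blast
  from this[OF opened_0 O01] have cost: "(\<Sum>j\<in>?O. c j) = c 0" using c1 by (elim disjE) simp_all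
  have reward: "w (snd (run \<sigma> y k [])) \<le> max (w x) (w (y 0))"
  proof (cases "snd (run \<sigma> y k []) = 0")
    case True
    then show ?thesis using mono_onD[OF mono_reward, of 0 x] x by simp
  next
    case False
    with run_Nil_presented[OF v, of y k]
    have "\<exists>j \<in> ?O. snd (run \<sigma> y k []) = y j" by simp
    then obtain j where "j \<in> ?O" and j: "snd (run \<sigma> y k []) = y j" ..
    from subsetD[OF O01 this(1)] have "j = 0 \<or> j = 1" by simp
    then show ?thesis
    proof
      assume "j = 1" then show ?thesis using j y by simp
    qed (use j in simp)
  qed
  from reward cost show ?thesis unfolding agent_payoff_def by simp
qed

text \<open>The agent can secure \<open>w x\<close>, and opening project 0 is decided before its prize is seen;
  opening it would yield at most \<open>w x + excess w (F 0) (w x) - c 0 < w x\<close>.\<close>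
lemma safe_project_never_opens_0:
  assumes F1: "F 1 = return borel x" and c1: "c 1 = 0" and x: "0 \<le> x"
    and lt: "excess w (F 0) (w x) < c 0"
    and v: "valid_strategy 1 \<sigma>"
    and int: "integrable (PiM {0..1} F) (\<lambda>y. agent_payoff w c (run \<sigma> y k []))"
    and opt: "w x \<le> (\<integral>y. agent_payoff w c (run \<sigma> y k []) \<partial>PiM {0..1} F)"
  shows "AE y in PiM {0..1} F. 0 \<notin> fst ` set (fst (run \<sigma> y k []))"
proof -
  interpret P: prob_space "PiM {0..1} F" by (rule prob_space_PiM_F)
  define e where "e \<longleftrightarrow> 0 \<in> fst ` set (fst (run \<sigma> (\<lambda>i. if i = 1 then x else 0) k []))"
  have e: "y 1 = x \<Longrightarrow> 0 \<in> fst ` set (fst (run \<sigma> y k [])) \<longleftrightarrow> e" for y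
    unfolding e_def by (rule opens_0_eq[OF v])
  have "\<not> e"
  proof
    assume e
    have "AE y in PiM {0..1} F. agent_payoff w c (run \<sigma> y k []) \<le> max (w x) (w (y 0)) - c 0"
      using AE_safe_prize[OF F1]
    proof eventually_elim
      case (elim y)
      with e[of y] \<open>e\<close> show ?case by (intro agent_payoff_le_opening_0[OF v c1 x]) simp_all
    qed
    moreover have int0: "integrable (PiM {0..1} F) (\<lambda>y. max (w x) (w (y 0)))"
      by (rule integrable_PiM_component[OF prob_space_F _ integrable_max[OF integrable_const_F integrable_reward]])
        simp
    ultimately have "(\<integral>y. agent_payoff w c (run \<sigma> y k []) \<partial>PiM {0..1} F)
        \<le> (\<integral>y. max (w x) (w (y 0)) - c 0 \<partial>PiM {0..1} F)"
      by (intro integral_mono_AE int Bochner_Integration.integrable_diff P.integrable_const)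
    also have "\<dots> = (\<integral>y. max (w x) (w (y 0)) \<partial>PiM {0..1} F) - c 0"
      by (subst Bochner_Integration.integral_diff[OF int0 P.integrable_const]) (use P.prob_space in simp)
    also have "(\<integral>y. max (w x) (w (y 0)) \<partial>PiM {0..1} F) = (\<integral>t. max (w x) (w t) \<partial>F 0)"
      by (rule integral_PiM_component[OF prob_space_F _ integrable_max[OF integrable_const_F integrable_reward]])
        simp
    also have "\<dots> = w x + excess w (F 0) (w x)"
      by (rule integral_max_eq_excess[OF prob_space_F integrable_reward])
    finally show False using opt lt by simp
  qed
  from AE_safe_prize[OF F1] show ?thesis
  proof eventually_elim
    case (elim y)
    then show ?case using e[of y, OF elim] \<open>\<not> e\<close> by simp
  qed
qed

lemma principal_payoff_le_safe_prize_AE: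
  assumes F1: "F 1 = return borel x" and c1: "c 1 = 0" and x: "0 \<le> x"
    and r: "r < w x" "excess w (F 0) r = c 0"
    and v: "valid_strategy 1 \<sigma>"
    and int: "integrable (PiM {0..1} F) (\<lambda>y. agent_payoff w c (run \<sigma> y k []))"
    and opt: "w x \<le> (\<integral>y. agent_payoff w c (run \<sigma> y k []) \<partial>PiM {0..1} F)"
  shows "AE y in PiM {0..1} F. principal_payoff w (run \<sigma> y k []) \<le> x - w x"
proof (cases "excess w (F 0) (w x) = c 0")
  case True
  have "AE t in F 0. w t < w x"
    using excess_eq_AE_less[OF prob_space_F integrable_reward r(1)] r(2) True by simp
  then have "AE y in PiM {0..1} F. w (y 0) < w x"
    by (intro AE_PiM_component prob_space_F) auto
  with AE_safe_prize[OF F1] AE_PiM_nonneg[OF finite_atLeastAtMost]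
  show ?thesis
  proof eventually_elim
    case (elim y)
    have "y 0 \<le> x"
      using elim mono_onD[OF mono_reward, of x "y 0"] x by force
    then show ?case using elim x by (intro principal_payoff_le_safe_prize[OF v]) auto
  qed
next
  case False
  then have "excess w (F 0) (w x) < c 0"
    using excess_antimono[OF prob_space_F integrable_reward, of r "w x" 0] r by simp
  from safe_project_never_opens_0[OF F1 c1 x this v int opt] AE_safe_prize[OF F1]
    AE_PiM_nonneg[OF finite_atLeastAtMost]
  show ?thesis
  proof eventually_elim
    case (elim y)
    then show ?case using x by (intro principal_payoff_le_safe_prize[OF v]) auto
  qed
qed

end

section \<open>Bounds on the payoff guarantee\<close>

lemma VP_le_VP_cond_single:
  assumes "valid_project a0"
  shows "VP w a0 \<le> VP_cond w 0 (\<lambda>_. a0)"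
proof -
  have "(0, \<lambda>_. a0) \<in> {(n, a). a 0 = a0 \<and> (\<forall>i\<le>n. valid_project (a i))}" using assms by simp
  from INF_lower[OF this, of "\<lambda>na. VP_cond w (fst na) (snd na)"] show ?thesis
    unfolding VP_def by simp
qed

lemma VP_ge:
  assumes a0: "valid_project a0" and w: "contract w" "doubly_monotone w"
    and B: "\<And>x. 0 \<le> x \<Longrightarrow> r_index w a0 < ereal (w x) \<Longrightarrow> B \<le> x - w x"
  shows "ereal (min (\<integral>t. t - w t \<partial>fst a0) B) \<le> VP w a0"
  unfolding VP_def
proof (rule INF_greatest)
  fix na :: "nat \<times> (nat \<Rightarrow> project)"
  assume "na \<in> {(n, a). a 0 = a0 \<and> (\<forall>i\<le>n. valid_project (a i))}"
  then obtain n a where na: "na = (n, a)" "a 0 = a0" "\<forall>i\<le>n. valid_project (a i)" by auto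
  have "ereal (min (\<integral>t. t - w t \<partial>fst (a 0)) B) \<le> VP_cond w n a"
  proof (rule VP_cond_ge[OF na(3) w])
    fix x :: real assume "0 \<le> x" "excess w (fst (a 0)) (w x) < snd (a 0)"
    moreover have "prob_space (fst a0)" "0 \<le> snd a0" using a0 unfolding valid_project_def by auto
    ultimately show "B \<le> x - w x"
      using B r_index_less[OF _ integrable_contract[OF a0 w]] na(2) by blast
  qed
  then show "ereal (min (\<integral>t. t - w t \<partial>fst a0) B) \<le> VP_cond w (fst na) (snd na)"
    using na by simp
qed

lemma VP_cond_single_le:
  assumes a0: "valid_project a0" and w: "contract w" "doubly_monotone w"
  shows "VP_cond w 0 (\<lambda>_. a0) \<le> ereal (\<integral>t. t - w t \<partial>fst a0)"
  unfolding VP_cond_def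
proof (rule SUP_least)
  fix \<sigma> assume "\<sigma> \<in> opt_strats w 0 (\<lambda>_. a0)"
  then have adm: "admissible 0 (\<lambda>_. a0) \<sigma>" unfolding opt_strats_def by blast
  interpret doubly_monotone_search w "prize_dists 0 (\<lambda>_. a0)" "\<lambda>_. snd a0"
    using doubly_monotone_search_prize_dists[of 0 "\<lambda>_. a0"] a0 w by simp
  let ?F = "prize_dists 0 (\<lambda>_. a0)"
  have F0: "?F 0 = fst a0" by (simp add: prize_dists_def)
  note adm' = admissibleD[OF adm]
  have "AE y in PiM {0..0} ?F. principal_payoff w (run \<sigma> y (0+2) []) \<le> y 0 - w (y 0)"
    using AE_PiM_nonneg[OF finite_atLeastAtMost, of 0 0]
  proof eventually_elim
    case (elim y)
    then show ?case by (intro principal_payoff_le_single_prize[OF adm'(1)]) simp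
  qed
  then have "principal_value w 0 (\<lambda>_. a0) \<sigma> \<le> (\<integral>y. y 0 - w (y 0) \<partial>PiM {0..0} ?F)"
    unfolding principal_value_eq prizes_eq_PiM_prize_dists
    by (rule integral_mono_AE[OF integrable_principal_payoff[OF adm'] integrable_PiM_component[OF
          prob_space_F _ Bochner_Integration.integrable_diff[OF integrable_prize integrable_reward]], rotated]) simp
  also have "\<dots> = (\<integral>t. t - w t \<partial>fst a0)"
    using integral_PiM_component[OF prob_space_F _ Bochner_Integration.integrable_diff[OF integrable_prize integrable_reward], of 0 "{0..0}"]
    by (simp add: F0)
  finally show "ereal (principal_value w 0 (\<lambda>_. a0) \<sigma>) \<le> ereal (\<integral>t. t - w t \<partial>fst a0)" by simp
qed

lemma VP_cond_safe_project_le: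
  assumes a0: "valid_project a0" and w: "contract w" "doubly_monotone w"
    and x: "0 \<le> x" and index: "r_index w a0 < ereal (w x)"
  shows "VP_cond w 1 (add_safe_project a0 x) \<le> ereal (x - w x)"
  unfolding VP_cond_def
proof (rule SUP_least)
  let ?b = "add_safe_project a0 x"
  let ?F = "prize_dists 1 ?b" and ?c = "\<lambda>i. snd (?b i)"
  fix \<sigma> assume "\<sigma> \<in> opt_strats w 1 ?b"
  then have adm: "admissible 1 ?b \<sigma>"
    and opt: "w x \<le> agent_value w 1 ?b \<sigma>"
    using admissible_take_safe_prize[OF a0 w x] agent_value_take_safe_prize[OF a0 w x]
    unfolding opt_strats_def by auto
  interpret doubly_monotone_search w ?F ?c
    by (rule doubly_monotone_search_prize_dists[OF valid_add_safe_project[OF a0 x] w])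
  have F: "?F 0 = fst a0" "?F 1 = return borel x" and c: "?c 0 = snd a0" "?c 1 = 0"
    by (simp_all add: prize_dists_def add_safe_project_def)
  obtain r where r: "r < w x" "excess w (?F 0) r = ?c 0"
    using r_index_lessE[OF _ integrable_contract[OF a0 w] _ index] a0
    unfolding F c valid_project_def by blast
  note adm' = admissibleD[OF adm]
  interpret P: prob_space "PiM {0..1} ?F" by (rule prob_space_PiM_F)
  have "AE y in PiM {0..1} ?F. principal_payoff w (run \<sigma> y (1+2) []) \<le> x - w x"
    using opt integrable_agent_payoff[OF adm']
    unfolding agent_value_eq prizes_eq_PiM_prize_dists
    by (intro principal_payoff_le_safe_prize_AE[OF F(2) c(2) x r adm'(1)])
  then have "principal_value w 1 ?b \<sigma> \<le> (\<integral>y. x - w x \<partial>PiM {0..1} ?F)"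
    unfolding principal_value_eq prizes_eq_PiM_prize_dists
    using integrable_principal_payoff[OF adm'] by (intro integral_mono_AE P.integrable_const)
  then show "ereal (principal_value w 1 ?b \<sigma>) \<le> ereal (x - w x)"
    using P.prob_space by simp
qed

text \<open>With \<open>B = V\<^sub>P(w) + \<epsilon>\<close>, \<open>VP_ge\<close> would push the guarantee above itself
  unless some safe project with index-beating reward caps the principal below \<open>V\<^sub>P(w) + \<epsilon>\<close>.\<close>
lemma VP_approached_by_safe_projects:
  assumes a0: "valid_project a0" and w: "contract w" "doubly_monotone w"
    and lt: "VP w a0 < ereal (\<integral>t. t - w t \<partial>fst a0)" and \<epsilon>: "0 < \<epsilon>"
  shows "\<exists>x\<ge>0. r_index w a0 < ereal (w x) \<and> VP_cond w 1 (add_safe_project a0 x) < VP w a0 + ereal \<epsilon>"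
proof (rule ccontr)
  let ?E = "\<integral>t. t - w t \<partial>fst a0"
  assume "\<not> ?thesis"
  then have far: "VP w a0 + ereal \<epsilon> \<le> VP_cond w 1 (add_safe_project a0 x)"
    if "0 \<le> x" "r_index w a0 < ereal (w x)" for x
    using that by (auto simp: not_less)
  have "- w 0 \<le> x - w x" if "0 \<le> x" for x
    using mono_onD[of "{0..}" "\<lambda>y. y - w y" 0 x] w(2) that by (simp add: doubly_monotone_def)
  then have "ereal (min ?E (- w 0)) \<le> VP w a0" by (intro VP_ge[OF a0 w])
  with lt obtain v where v: "VP w a0 = ereal v"
    by (cases "VP w a0") (auto simp: min_def split: if_splits)
  have "v + \<epsilon> \<le> x - w x" if "0 \<le> x" "r_index w a0 < ereal (w x)" for x
    using order_trans[OF far[OF that] VP_cond_safe_project_le[OF a0 w that]] v by simp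
  then have "ereal (min ?E (v + \<epsilon>)) \<le> VP w a0" by (intro VP_ge[OF a0 w])
  then show False using v lt \<epsilon> by (simp add: min_def split: if_splits)
qed

theorem mainTheorem1:
  fixes w :: "real \<Rightarrow> real" and a0 :: project
  assumes "valid_project a0"
    and "contract w"
    and "doubly_monotone w"
  shows "VP_cond w 0 (\<lambda>_. a0) = VP w a0 \<or>
         (\<forall>\<epsilon>>0. \<exists>x\<ge>0. ereal (w x) > r_index w a0 \<and>
            VP_cond w 1 (\<lambda>i. if i = 0 then a0 else (return borel x, 0)) < VP w a0 + ereal \<epsilon>)"
proof (cases "VP_cond w 0 (\<lambda>_. a0) = VP w a0")
  case False
  with VP_le_VP_cond_single[OF assms(1), of w] have "VP w a0 < VP_cond w 0 (\<lambda>_. a0)"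
    by (simp add: order_less_le)
  also have "\<dots> \<le> ereal (\<integral>t. t - w t \<partial>fst a0)" by (rule VP_cond_single_le[OF assms])
  finally have "VP w a0 < ereal (\<integral>t. t - w t \<partial>fst a0)" .
  from VP_approached_by_safe_projects[OF assms this] show ?thesis
    unfolding add_safe_project_def[abs_def] by blast
qed simp

end
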